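(* Let $n\ge 2$ and let $M \in \mathcal{S}_n$ be a simple minimiser, and let $\mathbf{w}$ be a unit eigenvector of $M$ for the eigenvalue $\lambda_{n-1}(M)$. Then, after applying a common permutation to the rows and columns of $M$ (and the same permutation to the coordinates of $\mathbf{w}$), there are integers $P,N \ge 1$ and $Z \ge 0$ with $P+N+Z=n$ such that \[ M = \begin{pmatrix} O_{P} & J_{P,N} & X \\ J_{N,P} & O_{N} & Y \\ X^T & Y^T & W \end{pmatrix}, \] where $X, Y, W$ are $P\times Z$, $N\times Z$ and $Z\times Z$ matrices with entries in $[0,1]$ satisfying $\frac{1}{\sqrt{P}}X^T\mathbf{j}_P = \frac{1}{\sqrt{N}}Y^T\mathbf{j}_N$; moreover \[ \mathbf{w}^T = \begin{pmatrix} \frac{\mathbf{j}_P^T}{\sqrt{2P}} & -\frac{\mathbf{j}_N^T}{\sqrt{2N}} & \mathbf{0}_{Z}^T \end{pmatrix} \quad\text{and}\quad \lambda_{n-1}(M) = -\sqrt{PN}. \]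
   Context: $\mathcal{S}_n$ is the set of $n\times n$ real symmetric matrices with all entries in $[0,1]$; $\lambda_k(M)$ is the $k$-th largest eigenvalue of $M$ counted with multiplicity. A simple minimiser is a matrix $M\in\mathcal{S}_n$ with $\lambda_n(M) < \lambda_{n-1}(M)$ such that $\lambda_{n-1}(M)\le\lambda_{n-1}(M')$ for all $M'\in\mathcal{S}_n$. $O_m$ is the $m\times m$ zero matrix, $J_{m,l}$ the $m\times l$ all-ones matrix, $\mathbf{j}_m$ the all-ones vector of length $m$ and $\mathbf{0}_m$ the zero vector of length $m$. *)

theory Defs
  imports "Jordan_Normal_Form.Char_Poly" "HOL-Computational_Algebra.Polynomial"
begin

definition S :: "nat \<Rightarrow> real mat set" where
  "S n = {M. M \<in> carrier_mat n n \<and> transpose_mat M = M \<and>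
             (\<forall>i<n. \<forall>j<n. 0 \<le> M $$ (i,j) \<and> M $$ (i,j) \<le> 1)}"

text \<open>For a real symmetric
  matrix these are all of its eigenvalues.\<close>
definition eigs_desc :: "real mat \<Rightarrow> real list" where
  "eigs_desc M = rev (sorted_list_of_multiset (proots (char_poly M)))"

text \<open>lambda M k = k-th largest eigenvalue (k counted from 1).\<close>
definition lambda :: "real mat \<Rightarrow> nat \<Rightarrow> real" where
  "lambda M k = eigs_desc M ! (k - 1)"

definition simple_minimiser :: "nat \<Rightarrow> real mat \<Rightarrow> bool" where
  "simple_minimiser n M \<longleftrightarrow> M \<in> S n \<and> lambda M n < lambda M (n - 1) \<and>
     (\<forall>M' \<in> S n. lambda M (n - 1) \<le> lambda M' (n - 1))"

text \<open>The 3x3 block matrix [[O_P, J_{P,N}, X], [J_{N,P}, O_N, Y], [X^T, Y^T, W]].\<close>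
definition block_form :: "nat \<Rightarrow> nat \<Rightarrow> nat \<Rightarrow> real mat \<Rightarrow> real mat \<Rightarrow> real mat \<Rightarrow> real mat" where
  "block_form P N Z X Y W = mat (P + N + Z) (P + N + Z) (\<lambda>(i,j).
     if i < P then (if j < P then 0 else if j < P + N then 1 else X $$ (i, j - P - N))
     else if i < P + N then (if j < P then 1 else if j < P + N then 0 else Y $$ (i - P, j - P - N))
     else (if j < P then X $$ (j, i - P - N) else if j < P + N then Y $$ (j - P, i - P - N)
           else W $$ (i - P - N, j - P - N)))"

definition entries_01 :: "real mat \<Rightarrow> bool" where
  "entries_01 A \<longleftrightarrow> (\<forall>i<dim_row A. \<forall>j<dim_col A. 0 \<le> A $$ (i,j) \<and> A $$ (i,j) \<le> 1)"

end

theory Submission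
  imports Defs
begin

text \<open>
  Let \<open>u\<close> and \<open>w\<close> be orthonormal eigenvectors of the simple minimiser \<open>M\<close> for
  \<open>\<lambda>\<^sub>n < \<lambda>\<^sub>n\<^sub>-\<^sub>1\<close>. Moving the symmetric pair of entries \<open>M\<^sub>i\<^sub>j = M\<^sub>j\<^sub>i\<close> by a small \<open>h\<close>
  changes the quadratic form on the plane spanned by \<open>u\<close> and \<open>w\<close> by \<open>h\<close> times the form
  of the matrix unit \<open>E\<^sub>i\<^sub>j + E\<^sub>j\<^sub>i\<close>; if \<open>h \<cdot> (w\<^sup>T (E\<^sub>i\<^sub>j + E\<^sub>j\<^sub>i) w) < 0\<close>, the form drops
  below \<open>\<lambda>\<^sub>n\<^sub>-\<^sub>1\<close> on the whole plane, and by the min-max principle so does the second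
  smallest eigenvalue, contradicting minimality. Hence \<open>M\<^sub>i\<^sub>j = 0\<close> whenever
  \<open>w\<^sub>i w\<^sub>j > 0\<close> and \<open>M\<^sub>i\<^sub>j = 1\<close> whenever \<open>w\<^sub>i w\<^sub>j < 0\<close>.

  Comparing with \<open>J - I\<close> (for \<open>n = 2\<close>, with the trace) shows \<open>\<lambda>\<^sub>n\<^sub>-\<^sub>1 < 0\<close>. The eigenvalue equation at a coordinate
  where \<open>w\<close> is positive (negative) then reads \<open>\<lambda>\<^sub>n\<^sub>-\<^sub>1 w\<^sub>i\<close> = sum of the negative (positive)
  entries of \<open>w\<close>, so \<open>w\<close> is constant on both supports; together with \<open>\<parallel>w\<parallel> = 1\<close> this
  determines \<open>w\<close> and \<open>\<lambda>\<^sub>n\<^sub>-\<^sub>1 = -\<surd>(P N)\<close>. At a zero coordinate of \<open>w\<close> the same equation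
  is the balance condition between the columns of \<open>X\<close> and \<open>Y\<close>.
\<close>

section \<open>Orthonormal matrices and the spectral theorem\<close>

definition orthonormal_mat :: "nat \<Rightarrow> real mat \<Rightarrow> bool" where
  "orthonormal_mat n Q \<longleftrightarrow> Q \<in> carrier_mat n n \<and> transpose_mat Q * Q = 1\<^sub>m n"

lemma orthonormal_matD:
  assumes "orthonormal_mat n Q"
  shows "Q \<in> carrier_mat n n" "transpose_mat Q * Q = 1\<^sub>m n" "Q * transpose_mat Q = 1\<^sub>m n"
  using assms mat_mult_left_right_inverse[of "transpose_mat Q" n Q]
  unfolding orthonormal_mat_def by auto

lemma orthonormal_mat_mult:
  assumes "orthonormal_mat n Q" "orthonormal_mat n R"
  shows "orthonormal_mat n (Q * R)"
proof -
  have Q: "Q \<in> carrier_mat n n" "transpose_mat Q * Q = 1\<^sub>m n"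
    and R: "R \<in> carrier_mat n n" "transpose_mat R * R = 1\<^sub>m n"
    using assms by (auto dest: orthonormal_matD)
  have "transpose_mat (Q * R) * (Q * R) = transpose_mat R * ((transpose_mat Q * Q) * R)"
    using Q(1) R(1) by (simp add: transpose_mult[OF Q(1) R(1)] assoc_mult_mat[of _ n n _ n _ n])
  also have "\<dots> = 1\<^sub>m n"
    using Q R by simp
  finally show ?thesis
    using Q R unfolding orthonormal_mat_def by simp
qed

lemma orthonormal_mat_transpose:
  assumes "orthonormal_mat n Q"
  shows "orthonormal_mat n (transpose_mat Q)"
  using orthonormal_matD[OF assms] unfolding orthonormal_mat_def by simp

lemma orthonormal_mat_scalar_prod:
  assumes Q: "orthonormal_mat n Q" and x: "x \<in> carrier_vec n" and y: "y \<in> carrier_vec n"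
  shows "(Q *\<^sub>v x) \<bullet> (Q *\<^sub>v y) = x \<bullet> y"
proof -
  have Q': "Q \<in> carrier_mat n n" "transpose_mat Q * Q = 1\<^sub>m n"
    using Q by (auto dest: orthonormal_matD)
  have "(Q *\<^sub>v x) \<bullet> (Q *\<^sub>v y) = (transpose_mat Q *\<^sub>v (Q *\<^sub>v x)) \<bullet> y"
    using transpose_vec_mult_scalar[of Q n n y "Q *\<^sub>v x"] Q' x y by simp
  also have "transpose_mat Q *\<^sub>v (Q *\<^sub>v x) = x"
    using Q' x by (simp flip: assoc_mult_mat_vec[of _ n n Q n x])
  finally show ?thesis .
qed

lemma mult_mat_vec_unit_vec:
  fixes A :: "'a :: semiring_1 mat"
  assumes "A \<in> carrier_mat nr n" "k < n"
  shows "A *\<^sub>v unit_vec n k = col A k"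
  using assms by (intro eq_vecI) (auto simp: carrier_matD)

lemma quadratic_form_orthonormal_conj:
  assumes "orthonormal_mat n Q" "D \<in> carrier_mat n n" "x \<in> carrier_vec n"
  shows "x \<bullet> ((Q * D * transpose_mat Q) *\<^sub>v x) =
    (transpose_mat Q *\<^sub>v x) \<bullet> (D *\<^sub>v (transpose_mat Q *\<^sub>v x))"
proof -
  have Q: "Q \<in> carrier_mat n n"
    using assms(1) by (rule orthonormal_matD)
  have "(Q * D * transpose_mat Q) *\<^sub>v x = Q *\<^sub>v (D *\<^sub>v (transpose_mat Q *\<^sub>v x))"
    using Q assms(2,3) by (simp add: assoc_mult_mat_vec[of _ n n _ n])
  then show ?thesis
    using Q assms(2,3) by (simp add: transpose_vec_mult_scalar)
qed

lemma quadratic_form_diagonal: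
  fixes D :: "real mat"
  assumes D: "D \<in> carrier_mat n n" "diagonal_mat D" and y: "y \<in> carrier_vec n"
  shows "y \<bullet> (D *\<^sub>v y) = (\<Sum>k<n. D $$ (k,k) * (y $ k)\<^sup>2)"
proof -
  have Dy: "(D *\<^sub>v y) $ k = D $$ (k,k) * y $ k" if k: "k < n" for k
  proof -
    have "(D *\<^sub>v y) $ k = (\<Sum>j\<in>{0..<n}. D $$ (k,j) * y $ j)"
      using D y k by (simp add: scalar_prod_def)
    also have "\<dots> = (\<Sum>j\<in>{0..<n}. if j = k then D $$ (k,k) * y $ k else 0)"
      using D k unfolding diagonal_mat_def by (intro sum.cong refl) auto
    finally show ?thesis
      using k by simp
  qed
  then show ?thesis
    using D y by (simp add: scalar_prod_def lessThan_atLeast0 power2_eq_square ac_simps)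
qed

lemma real_symmetric_complex_eigenvalue_real:
  fixes A :: "real mat" and v :: "complex vec"
  assumes A: "A \<in> carrier_mat n n" "transpose_mat A = A"
    and v: "v \<in> carrier_vec n" "v \<noteq> 0\<^sub>v n"
    and Av: "map_mat complex_of_real A *\<^sub>v v = c \<cdot>\<^sub>v v"
  shows "Im c = 0"
proof -
  define s where "s = (\<Sum>i<n. \<Sum>j<n. cnj (v$i) * of_real (A $$ (i,j)) * v$j)"
  define t where "t = (\<Sum>i<n. (cmod (v$i))\<^sup>2)"
  have "(map_mat complex_of_real A *\<^sub>v v) $ i = (\<Sum>j<n. of_real (A $$ (i,j)) * v$j)" if "i < n" for i
    using that A v by (simp add: scalar_prod_def lessThan_atLeast0)
  then have "s = (\<Sum>i<n. cnj (v$i) * (c * v$i))"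
    unfolding s_def using Av v by (auto simp: sum_distrib_left mult.assoc intro!: sum.cong)
  also have "\<dots> = c * of_real t"
    unfolding t_def by (simp add: sum_distrib_left complex_norm_square ac_simps del: of_real_power)
  finally have s_ct: "s = c * of_real t" .
  have A_sym: "A $$ (j,i) = A $$ (i,j)" if "i < n" "j < n" for i j
    by (metis A that carrier_matD index_transpose_mat(1))
  have "cnj s = (\<Sum>i<n. \<Sum>j<n. v$i * of_real (A $$ (i,j)) * cnj (v$j))"
    unfolding s_def by (simp add: cnj_sum)
  also have "\<dots> = (\<Sum>j<n. \<Sum>i<n. v$i * of_real (A $$ (i,j)) * cnj (v$j))"
    by (rule sum.swap)
  also have "\<dots> = s"
    unfolding s_def by (intro sum.cong refl) (simp add: A_sym mult.commute mult.left_commute)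
  finally have Im_s: "Im s = 0"
    by (metis cnj.simps(2) neg_equal_zero)
  obtain i where "i < n" "v$i \<noteq> 0"
    using v by (metis eq_vecI carrier_vecD index_zero_vec)
  then have "t > 0"
    unfolding t_def by (intro sum_pos2[of _ i]) auto
  then show ?thesis
    using Im_s unfolding s_ct by simp
qed

lemma real_symmetric_has_eigenvalue:
  fixes A :: "real mat"
  assumes A: "A \<in> carrier_mat n n" "transpose_mat A = A" and n: "n > 0"
  shows "\<exists>e. eigenvalue A e"
proof -
  define Ac where "Ac = map_mat complex_of_real A"
  have Ac: "Ac \<in> carrier_mat n n"
    using A by (simp add: Ac_def)
  have "degree (char_poly Ac) = n"
    using degree_monic_char_poly[OF Ac] by simp
  then have "\<not> constant (poly (char_poly Ac))"
    using n by (simp add: constant_degree)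
  then obtain c where c: "poly (char_poly Ac) c = 0"
    using fundamental_theorem_of_algebra by blast
  then have "eigenvalue Ac c"
    using eigenvalue_root_char_poly[OF Ac] by simp
  then obtain v where "eigenvector Ac v c"
    unfolding eigenvalue_def by blast
  then have v: "v \<in> carrier_vec n" "v \<noteq> 0\<^sub>v n" "Ac *\<^sub>v v = c \<cdot>\<^sub>v v"
    using Ac unfolding eigenvector_def by auto
  have "Im c = 0"
    using real_symmetric_complex_eigenvalue_real[OF A v(1,2)] v(3) unfolding Ac_def by blast
  then have c_real: "c = of_real (Re c)"
    by (simp add: complex_eq_iff)
  have "of_real (poly (char_poly A) (Re c)) = (0 :: complex)"
    using c unfolding Ac_def of_real_hom.char_poly_hom[OF A(1)]
    by (subst (asm) c_real) (simp only: of_real_hom.poly_map_poly)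
  then show ?thesis
    using eigenvalue_root_char_poly[OF A(1)] by auto
qed

lemma eigenvalue_unit_eigenvector:
  fixes A :: "real mat"
  assumes A: "A \<in> carrier_mat n n" and e: "eigenvalue A e"
  obtains v where "v \<in> carrier_vec n" "v \<bullet> v = 1" "A *\<^sub>v v = e \<cdot>\<^sub>v v"
proof -
  obtain x where x: "x \<in> carrier_vec n" "x \<noteq> 0\<^sub>v n" "A *\<^sub>v x = e \<cdot>\<^sub>v x"
    using e A unfolding eigenvalue_def eigenvector_def by auto
  have xx: "x \<bullet> x > 0"
    using conjugate_square_greater_0_vec[OF x(1)] x(2) by simp
  define v where "v = (1 / sqrt (x \<bullet> x)) \<cdot>\<^sub>v x"
  have "v \<in> carrier_vec n"
    using x(1) by (simp add: v_def)
  moreover have "v \<bullet> v = 1"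
    unfolding v_def using x(1) xx by (simp add: smult_scalar_prod_distrib scalar_prod_smult_distrib)
  moreover have "A *\<^sub>v v = e \<cdot>\<^sub>v v"
    unfolding v_def using x A by (simp add: mult_mat_vec smult_smult_assoc mult.commute)
  ultimately show ?thesis
    by (rule that)
qed

definition householder :: "real vec \<Rightarrow> real mat" where
  "householder y = mat (dim_vec y) (dim_vec y)
     (\<lambda>(i,j). (if i = j then 1 else 0) - 2 / (y \<bullet> y) * y$i * y$j)"

text \<open>For \<open>y = 0\<close> the junk value \<open>2 / 0 = 0\<close> makes \<open>householder y\<close> the identity, so no
  hypothesis \<open>y \<noteq> 0\<close> is needed.\<close>

lemma householder_orthonormal:
  assumes y: "y \<in> carrier_vec n"
  shows "orthonormal_mat n (householder y)"
proof -
  define c where "c = 2 / (y \<bullet> y)"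
  define H where "H = householder y"
  have H_eq: "H = mat n n (\<lambda>(i,j). (if i = j then 1 else 0) - c * y$i * y$j)"
    using y by (simp add: H_def householder_def c_def)
  have H: "H \<in> carrier_mat n n"
    by (simp add: H_eq)
  have H_sym: "transpose_mat H = H"
    unfolding H_eq by (rule eq_matI) (auto simp: mult.commute)
  have cc: "c * c * (y \<bullet> y) = 2 * c"
    by (cases "y \<bullet> y = 0") (simp_all add: c_def field_simps)
  have HH: "H * H = 1\<^sub>m n"
  proof (rule eq_matI)
    fix i j assume "i < dim_row (1\<^sub>m n)" "j < dim_col (1\<^sub>m n)"
    then have i: "i < n" and j: "j < n" by auto
    have "(H * H) $$ (i,j) = (\<Sum>k<n. ((if i = k then 1 else 0) - c * y$i * y$k) *
        ((if k = j then 1 else 0) - c * y$k * y$j))"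
      using i j by (simp add: H_eq scalar_prod_def lessThan_atLeast0)
    also have "\<dots> = (\<Sum>k<n. (if i = k then (if k = j then 1 else 0) else 0)
       - (if i = k then c * y$k * y$j else 0) - (if k = j then c * y$i * y$k else 0)
       + (c * c * y$i * y$j) * (y$k * y$k))"
      by (intro sum.cong refl) (auto simp: algebra_simps)
    also have "\<dots> = (\<Sum>k<n. (if i = k then (if k = j then 1 else 0) else 0))
       - (\<Sum>k<n. (if i = k then c * y$k * y$j else 0)) - (\<Sum>k<n. (if k = j then c * y$i * y$k else 0))
       + (c * c * y$i * y$j) * (\<Sum>k<n. y$k * y$k)"
      by (simp only: sum.distrib sum_subtractf sum_distrib_left)
    also have "(\<Sum>k<n. y$k * y$k) = y \<bullet> y"
      using y by (simp add: scalar_prod_def lessThan_atLeast0)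
    finally have "(H * H) $$ (i,j) = (if i = j then 1 else 0) - 2 * (c * y$i * y$j)
        + (c * c * (y \<bullet> y)) * y$i * y$j"
      using i j by simp
    then show "(H * H) $$ (i,j) = 1\<^sub>m n $$ (i,j)"
      using i j unfolding cc by (simp add: algebra_simps)
  qed (auto simp: H_eq)
  show ?thesis
    using H H_sym HH unfolding orthonormal_mat_def H_def by simp
qed

lemma householder_first_column:
  assumes v: "v \<in> carrier_vec n" "v \<bullet> v = 1" and n: "n > 0"
  shows "col (householder (v - unit_vec n 0)) 0 = v"
proof -
  define y where "y = v - unit_vec n 0"
  have y: "y \<in> carrier_vec n"
    using v by (simp add: y_def)
  have yi: "y $ i = v $ i - (if i = 0 then 1 else 0)" if "i < n" for i
    using v that by (simp add: y_def unit_vec_def)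
  have vv: "(\<Sum>i<n. v$i * v$i) = 1"
    using v by (simp add: scalar_prod_def lessThan_atLeast0)
  have "y \<bullet> y = (\<Sum>i<n. v$i * v$i - 2 * (if i = 0 then v$i else 0) + (if i = 0 then 1 else 0))"
    using y by (auto simp: scalar_prod_def lessThan_atLeast0 yi algebra_simps intro!: sum.cong)
  also have "\<dots> = 2 - 2 * v $ 0"
    using n vv by (simp add: sum.distrib sum_subtractf sum_distrib_left[symmetric])
  finally have yy: "y \<bullet> y = 2 - 2 * v $ 0" .
  have reflect: "2 / (y \<bullet> y) * y$i * y$0 = - y$i" if i: "i < n" for i
  proof (cases "y \<bullet> y = 0")
    case True
    then have "y = 0\<^sub>v n"
      using conjugate_square_eq_0_vec[OF y] by simp
    then show ?thesis
      using i by simp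
  next
    case False
    have "v $ 0 = y $ 0 + 1"
      using yi[OF n] by simp
    then show ?thesis
      using False unfolding yy by (simp add: field_simps)
  qed
  show ?thesis
    unfolding y_def[symmetric]
  proof (rule eq_vecI)
    fix i assume "i < dim_vec v"
    then have i: "i < n"
      using v by simp
    then show "col (householder y) 0 $ i = v $ i"
      using y n reflect[OF i] yi[OF i] by (simp add: householder_def)
  qed (use y v in \<open>simp add: householder_def\<close>)
qed

lemma orthonormal_conj_symmetric:
  fixes A :: "real mat"
  assumes Q: "orthonormal_mat n Q" and A: "A \<in> carrier_mat n n" "transpose_mat A = A"
  shows "transpose_mat (transpose_mat Q * A * Q) = transpose_mat Q * A * Q"
proof -
  have Qc: "Q \<in> carrier_mat n n" and Qt: "transpose_mat Q \<in> carrier_mat n n"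
    using orthonormal_matD(1)[OF Q] by auto
  have "transpose_mat (transpose_mat Q * A * Q) = transpose_mat Q * transpose_mat (transpose_mat Q * A)"
    using Qt A(1) Qc by (intro transpose_mult) auto
  also have "\<dots> = transpose_mat Q * (A * Q)"
    using transpose_mult[OF Qt A(1)] A(2) by simp
  also have "\<dots> = transpose_mat Q * A * Q"
    using Qt A(1) Qc by (simp add: assoc_mult_mat)
  finally show ?thesis .
qed

lemma orthonormal_conj_inverse:
  assumes Q: "orthonormal_mat n Q" and A: "A \<in> carrier_mat n n"
  shows "Q * (transpose_mat Q * A * Q) * transpose_mat Q = A"
proof -
  have Qc: "Q \<in> carrier_mat n n" and Qt: "transpose_mat Q \<in> carrier_mat n n"
    and QQ': "Q * transpose_mat Q = 1\<^sub>m n"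
    using orthonormal_matD[OF Q] by auto
  have "Q * (transpose_mat Q * A * Q) * transpose_mat Q = (Q * transpose_mat Q) * A * (Q * transpose_mat Q)"
    using Qc Qt A by (simp add: assoc_mult_mat[of _ n n _ n _ n])
  also have "\<dots> = A"
    using A by (simp add: QQ')
  finally show ?thesis .
qed

lemma orthonormal_conj_first_column:
  fixes A :: "real mat"
  assumes Q: "orthonormal_mat n Q" and A: "A \<in> carrier_mat n n" and n: "0 < n"
    and Qv: "col Q 0 = v" and Av: "A *\<^sub>v v = e \<cdot>\<^sub>v v"
  shows "col (transpose_mat Q * A * Q) 0 = e \<cdot>\<^sub>v unit_vec n 0"
proof -
  have Qc: "Q \<in> carrier_mat n n" and QQ: "transpose_mat Q * Q = 1\<^sub>m n"
    using orthonormal_matD[OF Q] by auto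
  have Qt: "transpose_mat Q \<in> carrier_mat n n" and QA: "transpose_mat Q * A \<in> carrier_mat n n"
    using Qc A by auto
  have Qe0: "Q *\<^sub>v unit_vec n 0 = v"
    using Qc n Qv by (simp add: mult_mat_vec_unit_vec)
  have v: "v \<in> carrier_vec n"
    unfolding Qv[symmetric] using Qc by (simp add: carrier_vecI)
  have "(transpose_mat Q * A * Q) *\<^sub>v unit_vec n 0 = transpose_mat Q *\<^sub>v (A *\<^sub>v v)"
    unfolding Qe0[symmetric] using Qc by (simp add: assoc_mult_mat_vec[OF QA Qc] assoc_mult_mat_vec[OF Qt A])
  also have "\<dots> = e \<cdot>\<^sub>v (transpose_mat Q *\<^sub>v (Q *\<^sub>v unit_vec n 0))"
    using v Av Qt by (simp add: mult_mat_vec Qe0)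
  also have "transpose_mat Q *\<^sub>v (Q *\<^sub>v unit_vec n 0) = unit_vec n 0"
    using Qc by (simp add: assoc_mult_mat_vec[symmetric, of _ n n] QQ)
  finally show ?thesis
    using mult_mat_vec_unit_vec[of "transpose_mat Q * A * Q" n n 0] Qc A n by simp
qed

lemma symmetric_deflation:
  fixes A :: "real mat"
  assumes A: "A \<in> carrier_mat (Suc m) (Suc m)" "transpose_mat A = A"
  obtains e Q B where "orthonormal_mat (Suc m) Q" "B \<in> carrier_mat m m" "transpose_mat B = B"
    and "A = Q * four_block_mat (mat 1 1 (\<lambda>_. e)) (0\<^sub>m 1 m) (0\<^sub>m m 1) B * transpose_mat Q"
proof -
  obtain e where "eigenvalue A e"
    using real_symmetric_has_eigenvalue[OF A] by blast
  then obtain v where v: "v \<in> carrier_vec (Suc m)" "v \<bullet> v = 1" "A *\<^sub>v v = e \<cdot>\<^sub>v v"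
    using eigenvalue_unit_eigenvector[OF A(1)] by blast
  define Q where "Q = householder (v - unit_vec (Suc m) 0)"
  have Q: "orthonormal_mat (Suc m) Q"
    unfolding Q_def using v(1) by (intro householder_orthonormal) simp
  define C where "C = transpose_mat Q * A * Q"
  have C: "C \<in> carrier_mat (Suc m) (Suc m)"
    using orthonormal_matD(1)[OF Q] A(1) by (simp add: C_def)
  have C_sym: "transpose_mat C = C"
    unfolding C_def by (rule orthonormal_conj_symmetric[OF Q A])
  have col_C: "col C 0 = e \<cdot>\<^sub>v unit_vec (Suc m) 0"
    using orthonormal_conj_first_column[OF Q A(1) _ _ v(3)] householder_first_column[OF v(1,2)]
    unfolding C_def Q_def by simp
  have C_col: "C $$ (i,0) = (if i = 0 then e else 0)" if "i < Suc m" for i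
  proof -
    have "col C 0 $ i = (e \<cdot>\<^sub>v unit_vec (Suc m) 0) $ i"
      unfolding col_C ..
    then show ?thesis
      using C that by simp
  qed
  have C_row: "C $$ (0,j) = (if j = 0 then e else 0)" if "j < Suc m" for j
    using C_col[OF that] C_sym C that by (metis carrier_matD index_transpose_mat(1) zero_less_Suc)
  define B where "B = mat m m (\<lambda>(i,j). C $$ (Suc i, Suc j))"
  have B: "B \<in> carrier_mat m m"
    by (simp add: B_def)
  have B_sym: "transpose_mat B = B"
    unfolding B_def by (rule eq_matI) (auto, metis C C_sym Suc_mono carrier_matD index_transpose_mat(1))
  have C_eq: "C = four_block_mat (mat 1 1 (\<lambda>_. e)) (0\<^sub>m 1 m) (0\<^sub>m m 1) B"
    by (rule eq_matI) (use C C_col C_row in \<open>auto simp: B_def\<close>)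
  have "A = Q * four_block_mat (mat 1 1 (\<lambda>_. e)) (0\<^sub>m 1 m) (0\<^sub>m m 1) B * transpose_mat Q"
    using orthonormal_conj_inverse[OF Q A(1)] unfolding C_def[symmetric] C_eq by simp
  with Q B B_sym show ?thesis
    by (rule that)
qed

lemma four_block_orthonormal_conj:
  assumes Q: "orthonormal_mat m Q" and D: "D \<in> carrier_mat m m"
  defines "Q' \<equiv> four_block_mat (1\<^sub>m 1) (0\<^sub>m 1 m) (0\<^sub>m m 1) Q"
  shows "orthonormal_mat (Suc m) Q'"
    and "four_block_mat (mat 1 1 (\<lambda>_. e)) (0\<^sub>m 1 m) (0\<^sub>m m 1) (Q * D * transpose_mat Q) =
      Q' * four_block_mat (mat 1 1 (\<lambda>_. e)) (0\<^sub>m 1 m) (0\<^sub>m m 1) D * transpose_mat Q'"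
proof -
  have Qc: "Q \<in> carrier_mat m m" and Qt: "transpose_mat Q \<in> carrier_mat m m"
    and QQ: "transpose_mat Q * Q = 1\<^sub>m m"
    using orthonormal_matD[OF Q] by auto
  have E: "mat 1 1 (\<lambda>_. e) \<in> carrier_mat 1 1"
    by simp
  have Q't: "transpose_mat Q' = four_block_mat (1\<^sub>m 1) (0\<^sub>m 1 m) (0\<^sub>m m 1) (transpose_mat Q)"
    unfolding Q'_def
    using transpose_four_block_mat[OF one_carrier_mat zero_carrier_mat zero_carrier_mat Qc] by simp
  note mult_blocks = mult_four_block_mat[OF _ zero_carrier_mat zero_carrier_mat _ _ zero_carrier_mat zero_carrier_mat]
  have "transpose_mat Q' * Q' = 1\<^sub>m (Suc m)"
    unfolding Q't unfolding Q'_def using Qc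
    by (simp add: mult_blocks[OF one_carrier_mat Qt one_carrier_mat Qc] QQ four_block_one_mat[of 1 m, simplified])
  then show "orthonormal_mat (Suc m) Q'"
    unfolding orthonormal_mat_def Q'_def using four_block_carrier_mat[OF one_carrier_mat Qc, of 1] by simp
  have QD: "Q * D \<in> carrier_mat m m"
    using Qc D by simp
  have "Q' * four_block_mat (mat 1 1 (\<lambda>_. e)) (0\<^sub>m 1 m) (0\<^sub>m m 1) D =
      four_block_mat (mat 1 1 (\<lambda>_. e)) (0\<^sub>m 1 m) (0\<^sub>m m 1) (Q * D)"
    unfolding Q'_def using mult_blocks[OF one_carrier_mat Qc E D] E Qc D by simp
  then show "four_block_mat (mat 1 1 (\<lambda>_. e)) (0\<^sub>m 1 m) (0\<^sub>m m 1) (Q * D * transpose_mat Q) =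
      Q' * four_block_mat (mat 1 1 (\<lambda>_. e)) (0\<^sub>m 1 m) (0\<^sub>m m 1) D * transpose_mat Q'"
    unfolding Q't using mult_blocks[OF E QD one_carrier_mat Qt] E QD Qt
    by (simp add: right_mult_zero_mat[OF QD])
qed

theorem real_symmetric_orthogonally_diagonalizable:
  fixes A :: "real mat"
  assumes "A \<in> carrier_mat n n" "transpose_mat A = A"
  shows "\<exists>Q D. orthonormal_mat n Q \<and> D \<in> carrier_mat n n \<and> diagonal_mat D \<and>
    A = Q * D * transpose_mat Q"
  using assms
proof (induction n arbitrary: A)
  case 0
  then show ?case
    by (intro exI[of _ "1\<^sub>m 0"]) (auto simp: orthonormal_mat_def diagonal_mat_def intro!: eq_matI)
next
  case (Suc m)
  obtain e Q1 B where Q1: "orthonormal_mat (Suc m) Q1" and B: "B \<in> carrier_mat m m" "transpose_mat B = B"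
    and A: "A = Q1 * four_block_mat (mat 1 1 (\<lambda>_. e)) (0\<^sub>m 1 m) (0\<^sub>m m 1) B * transpose_mat Q1"
    using symmetric_deflation[OF Suc.prems] by blast
  obtain Q3 D3 where Q3: "orthonormal_mat m Q3" and D3: "D3 \<in> carrier_mat m m" "diagonal_mat D3"
    and B_eq: "B = Q3 * D3 * transpose_mat Q3"
    using Suc.IH[OF B] by blast
  define Q2 where "Q2 = four_block_mat (1\<^sub>m 1) (0\<^sub>m 1 m) (0\<^sub>m m 1) Q3"
  define D where "D = four_block_mat (mat 1 1 (\<lambda>_. e)) (0\<^sub>m 1 m) (0\<^sub>m m 1) D3"
  have Q2: "orthonormal_mat (Suc m) Q2"
    and A_Q2: "A = Q1 * (Q2 * D * transpose_mat Q2) * transpose_mat Q1"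
    using four_block_orthonormal_conj[OF Q3 D3(1)] unfolding A B_eq Q2_def D_def by auto
  have D: "D \<in> carrier_mat (Suc m) (Suc m)" "diagonal_mat D"
    using D3 unfolding D_def diagonal_mat_def by auto
  have Q1c: "Q1 \<in> carrier_mat (Suc m) (Suc m)" and Q2c: "Q2 \<in> carrier_mat (Suc m) (Suc m)"
    using Q1 Q2 by (auto dest: orthonormal_matD)
  have "A = (Q1 * Q2) * D * transpose_mat (Q1 * Q2)"
    unfolding A_Q2 transpose_mult[OF Q1c Q2c] using Q1c Q2c D(1)
    by (simp add: assoc_mult_mat[of _ "Suc m" "Suc m" _ "Suc m" _ "Suc m"])
  then show ?case
    using orthonormal_mat_mult[OF Q1 Q2] D by blast
qed

section \<open>Eigenvalues of real symmetric matrices\<close>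

lemma proots_prod_linear_factors:
  "proots (\<Prod>a\<leftarrow>xs. [:- a, 1:]) = mset (xs :: 'a :: idom list)"
proof (induction xs)
  case (Cons a xs)
  have "(\<Prod>a\<leftarrow>xs. [:- a, 1:]) \<noteq> 0"
    by (auto simp: prod_list_zero_iff)
  then have "proots ([:- a, 1:] * (\<Prod>a\<leftarrow>xs. [:- a, 1:])) = proots [:- a, 1:] + mset xs"
    using Cons.IH by (subst proots_mult) simp_all
  then show ?case
    using proots_linear_factor[of "- a"] by simp
qed simp

lemma eigs_desc_orthonormal_diag:
  assumes Q: "orthonormal_mat n Q" and D: "D \<in> carrier_mat n n" "diagonal_mat D"
    and A: "A = Q * D * transpose_mat Q"
  shows "eigs_desc A = rev (sort (diag_mat D))"
proof -
  have "similar_mat_wit A D Q (transpose_mat Q)"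
    unfolding similar_mat_wit_def Let_def using orthonormal_matD[OF Q] D A by auto
  then have "similar_mat A D"
    unfolding similar_mat_def by blast
  then have "char_poly A = char_poly D"
    by (rule char_poly_similar)
  also have "\<dots> = (\<Prod>a\<leftarrow>diag_mat D. [:- a, 1:])"
    using D by (intro char_poly_upper_triangular) (auto simp: diagonal_mat_def upper_triangular_def)
  finally show ?thesis
    unfolding eigs_desc_def by (simp add: proots_prod_linear_factors)
qed

lemma lambda_eq_sort_nth:
  assumes "eigs_desc A = rev (sort ds)" "length ds = n" "1 \<le> k" "k \<le> n"
  shows "lambda A k = sort ds ! (n - k)"
  using assms unfolding lambda_def by (simp add: rev_nth)

lemma lambda_has_unit_eigenvector:
  fixes A :: "real mat"
  assumes A: "A \<in> carrier_mat n n" "transpose_mat A = A" and k: "1 \<le> k" "k \<le> n"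
  obtains u where "u \<in> carrier_vec n" "u \<bullet> u = 1" "A *\<^sub>v u = lambda A k \<cdot>\<^sub>v u"
proof -
  obtain Q D where Q: "orthonormal_mat n Q" and D: "D \<in> carrier_mat n n" "diagonal_mat D"
    and A_eq: "A = Q * D * transpose_mat Q"
    using real_symmetric_orthogonally_diagonalizable[OF A] by blast
  have Qc: "Q \<in> carrier_mat n n" and QQ: "transpose_mat Q * Q = 1\<^sub>m n"
    using orthonormal_matD[OF Q] by auto
  have "lambda A k = sort (diag_mat D) ! (n - k)"
    using lambda_eq_sort_nth[OF eigs_desc_orthonormal_diag[OF Q D A_eq] _ k] D
    by (simp add: diag_mat_def)
  also have "\<dots> \<in> set (diag_mat D)"
    using nth_mem[of "n - k" "sort (diag_mat D)"] D k by (simp add: diag_mat_def)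
  finally obtain l where l: "l < n" "D $$ (l,l) = lambda A k"
    using D by (auto simp: diag_mat_def)
  define u where "u = Q *\<^sub>v unit_vec n l"
  have u: "u \<in> carrier_vec n"
    using Qc by (simp add: u_def)
  have "D *\<^sub>v unit_vec n l = D $$ (l,l) \<cdot>\<^sub>v unit_vec n l"
    using D l by (intro eq_vecI) (auto simp: mult_mat_vec_unit_vec diagonal_mat_def)
  then have "A *\<^sub>v u = Q *\<^sub>v (D $$ (l,l) \<cdot>\<^sub>v unit_vec n l)"
    unfolding A_eq u_def using Qc D(1)
    by (simp add: assoc_mult_mat_vec[of _ n n _ n] assoc_mult_mat_vec[symmetric, of "transpose_mat Q" n n Q n] QQ)
  also have "\<dots> = lambda A k \<cdot>\<^sub>v u"
    unfolding u_def using Qc l by (simp add: mult_mat_vec)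
  finally have "A *\<^sub>v u = lambda A k \<cdot>\<^sub>v u" .
  moreover have "u \<bullet> u = 1"
    unfolding u_def using orthonormal_mat_scalar_prod[OF Q] l by simp
  ultimately show ?thesis
    using u that by blast
qed

lemma all_but_one_ge_if_sort_second_ge:
  fixes ds :: "'a :: linorder list"
  assumes len: "2 \<le> length ds" and second: "\<mu> \<le> sort ds ! 1"
  obtains k0 where "k0 < length ds" "\<And>k. k < length ds \<Longrightarrow> k \<noteq> k0 \<Longrightarrow> \<mu> \<le> ds ! k"
proof -
  have "{i. i < length (sort ds) \<and> sort ds ! i < \<mu>} \<subseteq> {0}"
  proof (intro subsetI)
    fix i assume i: "i \<in> {i. i < length (sort ds) \<and> sort ds ! i < \<mu>}"
    have "i < 1"
    proof (rule ccontr)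
      assume "\<not> i < 1"
      then have "sort ds ! 1 \<le> sort ds ! i"
        using i by (intro sorted_nth_mono) auto
      with second have "\<mu> \<le> sort ds ! i"
        by (rule order.trans)
      then show False
        using i leD by blast
    qed
    then show "i \<in> {0}"
      by simp
  qed
  then have "card {i. i < length (sort ds) \<and> sort ds ! i < \<mu>} \<le> card {0 :: nat}"
    by (intro card_mono) auto
  then have "length (filter (\<lambda>d. d < \<mu>) (sort ds)) \<le> 1"
    by (simp add: length_filter_conv_card)
  moreover have "length (filter (\<lambda>d. d < \<mu>) (sort ds)) = length (filter (\<lambda>d. d < \<mu>) ds)"
    by (metis mset_filter mset_sort size_mset)
  ultimately have "card {k. k < length ds \<and> ds ! k < \<mu>} \<le> Suc 0"
    by (simp add: length_filter_conv_card)
  then have unique: "k = l" if "k < length ds" "l < length ds" "ds ! k < \<mu>" "ds ! l < \<mu>" for k l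
    using that card_le_Suc0_iff_eq[of "{k. k < length ds \<and> ds ! k < \<mu>}"] by auto
  show ?thesis
  proof (cases "\<exists>k0 < length ds. ds ! k0 < \<mu>")
    case True
    then show ?thesis
      using unique that by (meson not_le)
  next
    case False
    have "\<mu> \<le> ds ! k" if "k < length ds" for k
      using False that leI by blast
    then show ?thesis
      using len by (intro that[of 0]) auto
  qed
qed

lemma quadratic_form_ge_except_one_eigendirection:
  fixes A :: "real mat"
  assumes Q: "orthonormal_mat n Q" and D: "D \<in> carrier_mat n n" "diagonal_mat D"
    and A: "A = Q * D * transpose_mat Q" and x: "x \<in> carrier_vec n"
    and above: "\<And>k. k < n \<Longrightarrow> k \<noteq> k0 \<Longrightarrow> \<mu> \<le> D $$ (k,k)"
    and x_k0: "(transpose_mat Q *\<^sub>v x) $ k0 = 0"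
  shows "\<mu> * (x \<bullet> x) \<le> x \<bullet> (A *\<^sub>v x)"
proof -
  define y where "y = transpose_mat Q *\<^sub>v x"
  have y: "y \<in> carrier_vec n"
    using orthonormal_matD(1)[OF Q] x by (simp add: y_def)
  have "\<mu> * (x \<bullet> x) = \<mu> * (y \<bullet> y)"
    unfolding y_def using orthonormal_mat_scalar_prod[OF orthonormal_mat_transpose[OF Q] x x] by simp
  also have "\<dots> = (\<Sum>k<n. \<mu> * (y $ k)\<^sup>2)"
    using y by (simp add: scalar_prod_def sum_distrib_left lessThan_atLeast0 power2_eq_square)
  also have "\<dots> \<le> (\<Sum>k<n. D $$ (k,k) * (y $ k)\<^sup>2)"
  proof (rule sum_mono)
    fix k assume "k \<in> {..<n}"
    then show "\<mu> * (y $ k)\<^sup>2 \<le> D $$ (k,k) * (y $ k)\<^sup>2"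
      using above[of k] x_k0 by (cases "k = k0") (auto simp: y_def intro: mult_right_mono)
  qed
  also have "\<dots> = x \<bullet> (A *\<^sub>v x)"
    unfolding A y_def using quadratic_form_orthonormal_conj[OF Q D(1) x]
      quadratic_form_diagonal[OF D] orthonormal_matD(1)[OF Q] x by simp
  finally show ?thesis .
qed

text \<open>The easy half of the Courant--Fischer min-max principle for \<open>\<lambda>\<^sub>n\<^sub>-\<^sub>1\<close>.\<close>

lemma lambda_penultimate_less:
  fixes A :: "real mat"
  assumes A: "A \<in> carrier_mat n n" "transpose_mat A = A" and n: "n \<ge> 2"
    and a: "a \<in> carrier_vec n" and b: "b \<in> carrier_vec n"
    and form_less: "\<And>\<alpha> \<beta>. (\<alpha>, \<beta>) \<noteq> (0, 0) \<Longrightarrow>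
       (\<alpha> \<cdot>\<^sub>v a + \<beta> \<cdot>\<^sub>v b) \<bullet> (A *\<^sub>v (\<alpha> \<cdot>\<^sub>v a + \<beta> \<cdot>\<^sub>v b)) <
       \<mu> * ((\<alpha> \<cdot>\<^sub>v a + \<beta> \<cdot>\<^sub>v b) \<bullet> (\<alpha> \<cdot>\<^sub>v a + \<beta> \<cdot>\<^sub>v b))"
  shows "lambda A (n - 1) < \<mu>"
proof (rule ccontr)
  assume "\<not> lambda A (n - 1) < \<mu>"
  obtain Q D where Q: "orthonormal_mat n Q" and D: "D \<in> carrier_mat n n" "diagonal_mat D"
    and A_eq: "A = Q * D * transpose_mat Q"
    using real_symmetric_orthogonally_diagonalizable[OF A] by blast
  have Qt: "transpose_mat Q \<in> carrier_mat n n"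
    using orthonormal_matD[OF Q] by simp
  have "lambda A (n - 1) = sort (diag_mat D) ! 1"
    using lambda_eq_sort_nth[OF eigs_desc_orthonormal_diag[OF Q D A_eq], of n "n - 1"] D n
    by (simp add: diag_mat_def)
  then obtain k0 where k0: "k0 < n" and above: "\<And>k. k < n \<Longrightarrow> k \<noteq> k0 \<Longrightarrow> \<mu> \<le> D $$ (k,k)"
    using all_but_one_ge_if_sort_second_ge[of "diag_mat D" \<mu>] \<open>\<not> lambda A (n - 1) < \<mu>\<close> D n
    by (auto simp: diag_mat_def)
  \<comment> \<open>a nonzero combination of \<open>a\<close> and \<open>b\<close> whose \<open>k0\<close>-th coordinate in the eigenbasis vanishes\<close>
  define ya where "ya = transpose_mat Q *\<^sub>v a"
  define yb where "yb = transpose_mat Q *\<^sub>v b"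
  define \<alpha> where "\<alpha> = (if ya $ k0 = 0 \<and> yb $ k0 = 0 then 1 else yb $ k0)"
  define \<beta> where "\<beta> = (if ya $ k0 = 0 \<and> yb $ k0 = 0 then 0 else - ya $ k0)"
  define x where "x = \<alpha> \<cdot>\<^sub>v a + \<beta> \<cdot>\<^sub>v b"
  have x: "x \<in> carrier_vec n"
    using a b by (simp add: x_def)
  have "transpose_mat Q *\<^sub>v x = \<alpha> \<cdot>\<^sub>v ya + \<beta> \<cdot>\<^sub>v yb"
    unfolding x_def ya_def yb_def using Qt a b by (simp add: mult_add_distrib_mat_vec mult_mat_vec)
  then have "(transpose_mat Q *\<^sub>v x) $ k0 = 0"
    using k0 Qt unfolding \<alpha>_def \<beta>_def ya_def yb_def by (auto simp: algebra_simps)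
  then have "\<mu> * (x \<bullet> x) \<le> x \<bullet> (A *\<^sub>v x)"
    using quadratic_form_ge_except_one_eigendirection[OF Q D A_eq x above] by blast
  moreover have "(\<alpha>, \<beta>) \<noteq> (0, 0)"
    unfolding \<alpha>_def \<beta>_def by auto
  then have "x \<bullet> (A *\<^sub>v x) < \<mu> * (x \<bullet> x)"
    unfolding x_def by (rule form_less)
  ultimately show False
    by linarith
qed

lemma length_eigs_desc:
  fixes A :: "real mat"
  assumes "A \<in> carrier_mat n n" "transpose_mat A = A"
  shows "length (eigs_desc A) = n"
proof -
  obtain Q D where "orthonormal_mat n Q" "D \<in> carrier_mat n n" "diagonal_mat D"
    "A = Q * D * transpose_mat Q"
    using real_symmetric_orthogonally_diagonalizable[OF assms] by blast
  then show ?thesis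
    using eigs_desc_orthonormal_diag by (simp add: diag_mat_def)
qed

lemma sum_diag_eq_sum_eigs_desc:
  fixes A :: "real mat"
  assumes A: "A \<in> carrier_mat n n" "transpose_mat A = A"
  shows "(\<Sum>i<n. A $$ (i,i)) = sum_list (eigs_desc A)"
proof -
  obtain Q D where Q: "orthonormal_mat n Q" and D: "D \<in> carrier_mat n n" "diagonal_mat D"
    and A_eq: "A = Q * D * transpose_mat Q"
    using real_symmetric_orthogonally_diagonalizable[OF A] by blast
  have Qc: "Q \<in> carrier_mat n n" and QQ: "transpose_mat Q * Q = 1\<^sub>m n"
    using orthonormal_matD[OF Q] by auto
  have A_ii: "A $$ (i,i) = (\<Sum>l<n. D $$ (l,l) * (Q $$ (i,l))\<^sup>2)" if i: "i < n" for i
  proof -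
    have "A $$ (i,i) = unit_vec n i \<bullet> (A *\<^sub>v unit_vec n i)"
      using A(1) i by (simp add: mult_mat_vec_unit_vec)
    also have "\<dots> = (\<Sum>l<n. D $$ (l,l) * ((transpose_mat Q *\<^sub>v unit_vec n i) $ l)\<^sup>2)"
      unfolding A_eq using quadratic_form_orthonormal_conj[OF Q D(1)]
        quadratic_form_diagonal[OF D] Qc by simp
    also have "\<dots> = (\<Sum>l<n. D $$ (l,l) * (Q $$ (i,l))\<^sup>2)"
      using Qc i by (intro sum.cong refl) (simp add: mult_mat_vec_unit_vec)
    finally show ?thesis .
  qed
  have col_norm: "(\<Sum>i<n. (Q $$ (i,l))\<^sup>2) = 1" if l: "l < n" for l
  proof -
    have "(transpose_mat Q * Q) $$ (l,l) = (\<Sum>i<n. (Q $$ (i,l))\<^sup>2)"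
      using Qc l by (simp add: scalar_prod_def lessThan_atLeast0 power2_eq_square)
    then show ?thesis
      using QQ l by simp
  qed
  have "(\<Sum>i<n. A $$ (i,i)) = (\<Sum>i<n. \<Sum>l<n. D $$ (l,l) * (Q $$ (i,l))\<^sup>2)"
    by (intro sum.cong refl) (simp add: A_ii)
  also have "\<dots> = (\<Sum>l<n. \<Sum>i<n. D $$ (l,l) * (Q $$ (i,l))\<^sup>2)"
    by (rule sum.swap)
  also have "\<dots> = (\<Sum>l<n. D $$ (l,l) * (\<Sum>i<n. (Q $$ (i,l))\<^sup>2))"
    by (simp add: sum_distrib_left)
  also have "\<dots> = sum_list (diag_mat D)"
    using D col_norm by (simp add: diag_mat_def interv_sum_list_conv_sum_set_nat lessThan_atLeast0)
  also have "\<dots> = sum_list (eigs_desc A)"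
    unfolding eigs_desc_orthonormal_diag[OF Q D A_eq] by (metis sum_list_rev mset_sort sum_mset_sum_list)
  finally show ?thesis .
qed

lemma lambda_zero_mat:
  assumes "1 \<le> k" "k \<le> n"
  shows "lambda (0\<^sub>m n n) k = 0"
proof -
  have I: "orthonormal_mat n (1\<^sub>m n)"
    by (simp add: orthonormal_mat_def)
  have "eigs_desc (0\<^sub>m n n) = rev (sort (diag_mat (0\<^sub>m n n)))"
    by (rule eigs_desc_orthonormal_diag[OF I]) (auto simp: diagonal_mat_def)
  then have "lambda (0\<^sub>m n n) k = sort (diag_mat (0\<^sub>m n n)) ! (n - k)"
    using assms by (intro lambda_eq_sort_nth) (auto simp: diag_mat_def)
  also have "\<dots> \<in> set (diag_mat (0\<^sub>m n n))"
    using nth_mem[of "n - k" "sort (diag_mat (0\<^sub>m n n))"] assms by (simp add: diag_mat_def)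
  finally show ?thesis
    by (auto simp: diag_mat_def)
qed

section \<open>Perturbing a symmetric pair of entries\<close>

lemma quadratic_form_double_sum:
  fixes A :: "real mat"
  assumes "A \<in> carrier_mat n n" "x \<in> carrier_vec n"
  shows "x \<bullet> (A *\<^sub>v x) = (\<Sum>k<n. \<Sum>l<n. x$k * A$$(k,l) * x$l)"
  using assms by (simp add: scalar_prod_def lessThan_atLeast0 sum_distrib_left mult.assoc)

lemma quadratic_form_eigenvector_plane:
  fixes M :: "real mat"
  assumes M: "M \<in> carrier_mat n n"
    and u: "u \<in> carrier_vec n" "u \<bullet> u = 1" "M *\<^sub>v u = p \<cdot>\<^sub>v u"
    and w: "w \<in> carrier_vec n" "w \<bullet> w = 1" "M *\<^sub>v w = q \<cdot>\<^sub>v w"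
    and uw: "u \<bullet> w = 0"
  shows "(a \<cdot>\<^sub>v u + b \<cdot>\<^sub>v w) \<bullet> (M *\<^sub>v (a \<cdot>\<^sub>v u + b \<cdot>\<^sub>v w)) = a\<^sup>2 * p + b\<^sup>2 * q"
    and "(a \<cdot>\<^sub>v u + b \<cdot>\<^sub>v w) \<bullet> (a \<cdot>\<^sub>v u + b \<cdot>\<^sub>v w) = a\<^sup>2 + b\<^sup>2"
proof -
  have wu: "w \<bullet> u = 0"
    using uw comm_scalar_prod[OF u(1) w(1)] by simp
  have "M *\<^sub>v (a \<cdot>\<^sub>v u + b \<cdot>\<^sub>v w) = (a * p) \<cdot>\<^sub>v u + (b * q) \<cdot>\<^sub>v w"
    using M u w by (simp add: mult_add_distrib_mat_vec mult_mat_vec smult_smult_assoc)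
  then show "(a \<cdot>\<^sub>v u + b \<cdot>\<^sub>v w) \<bullet> (M *\<^sub>v (a \<cdot>\<^sub>v u + b \<cdot>\<^sub>v w)) = a\<^sup>2 * p + b\<^sup>2 * q"
    using u w uw wu by (simp add: add_scalar_prod_distrib[of _ n] scalar_prod_add_distrib[of _ n]
        power2_eq_square algebra_simps)
  show "(a \<cdot>\<^sub>v u + b \<cdot>\<^sub>v w) \<bullet> (a \<cdot>\<^sub>v u + b \<cdot>\<^sub>v w) = a\<^sup>2 + b\<^sup>2"
    using u w uw wu by (simp add: add_scalar_prod_distrib[of _ n] scalar_prod_add_distrib[of _ n]
        power2_eq_square algebra_simps)
qed

definition sym_update :: "real mat \<Rightarrow> nat \<Rightarrow> nat \<Rightarrow> real \<Rightarrow> real mat" where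
  "sym_update M i j c = mat (dim_row M) (dim_col M)
     (\<lambda>(k,l). if (k,l) = (i,j) \<or> (k,l) = (j,i) then c else M $$ (k,l))"

text \<open>The bilinear form of the symmetric matrix with ones exactly at \<open>(i,j)\<close> and \<open>(j,i)\<close>.\<close>

definition entry_form :: "nat \<Rightarrow> nat \<Rightarrow> real vec \<Rightarrow> real vec \<Rightarrow> real" where
  "entry_form i j x y = (if i = j then x$i * y$i else x$i * y$j + x$j * y$i)"

lemma entry_form_linear_combination:
  assumes "i < n" "j < n" "u \<in> carrier_vec n" "w \<in> carrier_vec n"
  shows "entry_form i j (a \<cdot>\<^sub>v u + b \<cdot>\<^sub>v w) (a \<cdot>\<^sub>v u + b \<cdot>\<^sub>v w) =
    a\<^sup>2 * entry_form i j u u + 2 * a * b * entry_form i j u w + b\<^sup>2 * entry_form i j w w"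
  using assms by (simp add: entry_form_def power2_eq_square algebra_simps)

lemma sym_update_in_S:
  assumes "M \<in> S n" "i < n" "j < n" "0 \<le> c" "c \<le> 1"
  shows "sym_update M i j c \<in> S n"
proof -
  have M: "M \<in> carrier_mat n n" "transpose_mat M = M"
    and M01: "\<And>k l. k < n \<Longrightarrow> l < n \<Longrightarrow> 0 \<le> M $$ (k,l) \<and> M $$ (k,l) \<le> 1"
    using assms(1) unfolding S_def by auto
  have "M $$ (l,k) = M $$ (k,l)" if "k < n" "l < n" for k l
    by (metis M that carrier_matD index_transpose_mat(1))
  then show ?thesis
    using M M01 assms(4,5) unfolding S_def sym_update_def by (auto intro!: eq_matI)
qed

lemma sum_sum_delta:
  fixes c :: real and i j n :: nat
  assumes "i < n" "j < n"
  shows "(\<Sum>k<n. \<Sum>l<n. if k = i \<and> l = j then c else 0) = c"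
proof -
  have "(\<Sum>k<n. \<Sum>l<n. if k = i \<and> l = j then c else 0) = (\<Sum>k<n. if k = i then c else 0)"
  proof (intro sum.cong refl)
    fix k
    show "(\<Sum>l<n. if k = i \<and> l = j then c else 0) = (if k = i then c else 0)"
      using assms by (cases "k = i") simp_all
  qed
  also have "\<dots> = c"
    using assms by simp
  finally show ?thesis .
qed

lemma quadratic_form_sym_update:
  fixes M :: "real mat"
  assumes M: "M \<in> carrier_mat n n" and i: "i < n" and j: "j < n" and x: "x \<in> carrier_vec n"
    and sym: "M $$ (j,i) = M $$ (i,j)"
  shows "x \<bullet> (sym_update M i j c *\<^sub>v x) = x \<bullet> (M *\<^sub>v x) + (c - M $$ (i,j)) * entry_form i j x x"
proof -
  define h where "h = c - M $$ (i,j)"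
  have M': "sym_update M i j c \<in> carrier_mat n n"
    using M by (simp add: sym_update_def)
  have entry: "x$k * sym_update M i j c $$ (k,l) * x$l = x$k * M$$(k,l) * x$l
      + (if k = i \<and> l = j then h * (x$i * x$j) else 0)
      + (if k = j \<and> l = i \<and> i \<noteq> j then h * (x$j * x$i) else 0)" if "k < n" "l < n" for k l
    using M sym that by (auto simp: sym_update_def h_def algebra_simps)
  have "x \<bullet> (sym_update M i j c *\<^sub>v x) = (\<Sum>k<n. \<Sum>l<n. x$k * M$$(k,l) * x$l)
      + (\<Sum>k<n. \<Sum>l<n. if k = i \<and> l = j then h * (x$i * x$j) else 0)
      + (\<Sum>k<n. \<Sum>l<n. if k = j \<and> l = i \<and> i \<noteq> j then h * (x$j * x$i) else 0)"
    unfolding quadratic_form_double_sum[OF M' x] by (simp add: entry sum.distrib)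
  also have "\<dots> = x \<bullet> (M *\<^sub>v x) + h * (x$i * x$j) + (if i = j then 0 else h * (x$j * x$i))"
    using sum_sum_delta[OF i j] sum_sum_delta[OF j i] quadratic_form_double_sum[OF M x]
    by (cases "i = j") simp_all
  finally show ?thesis
    unfolding h_def entry_form_def by (cases "i = j") (simp_all add: algebra_simps)
qed

lemma negative_definite_binary_form:
  fixes P C R a b :: real
  assumes P: "P < 0" and D: "P * R - C\<^sup>2 > 0" and ab: "(a, b) \<noteq> (0, 0)"
  shows "P * a\<^sup>2 + 2 * C * a * b + R * b\<^sup>2 < 0"
proof -
  have "(P * a + C * b)\<^sup>2 + (P * R - C\<^sup>2) * b\<^sup>2 > 0"
  proof (cases "b = 0")
    case True
    then show ?thesis
      using ab P by simp
  next
    case False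
    then have "(P * R - C\<^sup>2) * b\<^sup>2 > 0"
      using D by simp
    then show ?thesis
      using zero_le_power2[of "P * a + C * b"] by linarith
  qed
  also have "(P * a + C * b)\<^sup>2 + (P * R - C\<^sup>2) * b\<^sup>2 = P * (P * a\<^sup>2 + 2 * C * a * b + R * b\<^sup>2)"
    by (simp add: algebra_simps power2_eq_square)
  finally show ?thesis
    using P by (simp add: zero_less_mult_iff)
qed

lemma perturbed_binary_form_negative:
  fixes d h p q r a b :: real
  assumes d: "d > 0" and hr: "h * r < 0"
    and small1: "\<bar>h\<bar> * 2 * (\<bar>p\<bar> + 1) \<le> d" and small2: "\<bar>h\<bar> * 2 * (q\<^sup>2 + 1) < d * \<bar>r\<bar>"
    and ab: "(a, b) \<noteq> (0, 0)"
  shows "(- d + h * p) * a\<^sup>2 + 2 * (h * q) * a * b + (h * r) * b\<^sup>2 < 0"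
proof (rule negative_definite_binary_form[OF _ _ ab])
  have "\<bar>h\<bar> * \<bar>p\<bar> \<le> \<bar>h\<bar> * (\<bar>p\<bar> + 1)"
    by (intro mult_left_mono) auto
  then have hp: "\<bar>h * p\<bar> \<le> d / 2"
    using small1 by (simp add: abs_mult)
  then show "- d + h * p < 0"
    using d by linarith
  have "(d / 2) * \<bar>h * r\<bar> \<le> (- d + h * p) * (h * r)"
  proof -
    have "(d / 2) * \<bar>h * r\<bar> \<le> (- (- d + h * p)) * \<bar>h * r\<bar>"
      using hp by (intro mult_right_mono) auto
    moreover have "\<bar>h * r\<bar> = - (h * r)"
      using hr by simp
    ultimately show ?thesis
      by (simp add: algebra_simps)
  qed
  moreover have "(h * q)\<^sup>2 < (d / 2) * \<bar>h * r\<bar>"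
  proof -
    have h: "\<bar>h\<bar> > 0"
      using hr by auto
    have "\<bar>h\<bar> * q\<^sup>2 \<le> \<bar>h\<bar> * (q\<^sup>2 + 1)"
      by (intro mult_left_mono) auto
    then have "\<bar>h\<bar> * q\<^sup>2 < d * \<bar>r\<bar> / 2"
      using small2 by (simp add: algebra_simps)
    then have "\<bar>h\<bar> * (\<bar>h\<bar> * q\<^sup>2) < \<bar>h\<bar> * (d * \<bar>r\<bar> / 2)"
      using h by (intro mult_strict_left_mono)
    then show ?thesis
      by (simp add: power2_eq_square abs_mult_self_eq abs_mult algebra_simps)
  qed
  ultimately show "(- d + h * p) * (h * r) - (h * q)\<^sup>2 > 0"
    by linarith
qed

lemma perturbation_radius_exists:
  fixes d p q r :: real
  assumes d: "d > 0" and r: "r \<noteq> 0"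
  obtains t where "t > 0"
    "\<And>h a b. \<bar>h\<bar> \<le> t \<Longrightarrow> h * r < 0 \<Longrightarrow> (a, b) \<noteq> (0, 0) \<Longrightarrow>
       (- d + h * p) * a\<^sup>2 + 2 * (h * q) * a * b + (h * r) * b\<^sup>2 < 0"
proof
  define t where "t = min (d / (2 * (\<bar>p\<bar> + 1))) (d * \<bar>r\<bar> / (4 * (q\<^sup>2 + 1)))"
  have q1: "0 < 4 * (q\<^sup>2 + 1)"
    by (intro mult_pos_pos add_nonneg_pos) simp_all
  have dr: "d * \<bar>r\<bar> > 0"
    using d r by simp
  show "t > 0"
    unfolding t_def using d dr q1 by simp
  fix h a b :: real
  assume h: "\<bar>h\<bar> \<le> t" and hr: "h * r < 0" and ab: "(a, b) \<noteq> (0, 0)"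
  have "\<bar>h\<bar> * (2 * (\<bar>p\<bar> + 1)) \<le> d"
    using h unfolding t_def by (simp add: pos_le_divide_eq)
  moreover have "\<bar>h\<bar> * (4 * (q\<^sup>2 + 1)) \<le> d * \<bar>r\<bar>"
    using h q1 unfolding t_def by (simp add: pos_le_divide_eq)
  then have "\<bar>h\<bar> * 2 * (q\<^sup>2 + 1) < d * \<bar>r\<bar>"
    using dr by (simp add: algebra_simps)
  ultimately show "(- d + h * p) * a\<^sup>2 + 2 * (h * q) * a * b + (h * r) * b\<^sup>2 < 0"
    using d hr ab by (intro perturbed_binary_form_negative) (simp_all add: mult.assoc)
qed

section \<open>Structure of a simple minimiser\<close>

lemma ones_minus_id_in_S: "mat n n (\<lambda>(i,j). if i = j then 0 else 1) \<in> S n"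
  unfolding S_def by (auto intro!: eq_matI)

lemma quadratic_form_ones_minus_id:
  fixes z :: "real vec"
  assumes z: "z \<in> carrier_vec n"
  shows "z \<bullet> (mat n n (\<lambda>(i,j). if i = j then 0 else 1) *\<^sub>v z) = (\<Sum>k<n. z $ k)\<^sup>2 - z \<bullet> z"
proof -
  have Jz: "(mat n n (\<lambda>(i,j). if i = j then 0 else 1) *\<^sub>v z) $ k = (\<Sum>l<n. z $ l) - z $ k"
    if k: "k < n" for k
  proof -
    have "(mat n n (\<lambda>(i,j). if i = j then 0 else 1) *\<^sub>v z) $ k = (\<Sum>l<n. z $ l - (if l = k then z $ l else 0))"
      using k z by (auto simp: scalar_prod_def lessThan_atLeast0 intro!: sum.cong)
    also have "\<dots> = (\<Sum>l<n. z $ l) - z $ k"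
      using k by (simp add: sum_subtractf)
    finally show ?thesis .
  qed
  have "z \<bullet> (mat n n (\<lambda>(i,j). if i = j then 0 else 1) *\<^sub>v z) = (\<Sum>k<n. z $ k * ((\<Sum>l<n. z $ l) - z $ k))"
    using z Jz by (simp add: scalar_prod_def lessThan_atLeast0)
  also have "\<dots> = (\<Sum>k<n. z $ k)\<^sup>2 - z \<bullet> z"
    using z by (simp add: right_diff_distrib sum_subtractf power2_eq_square scalar_prod_def
        lessThan_atLeast0 flip: sum_distrib_right)
  finally show ?thesis .
qed

lemma lambda_penultimate_ones_minus_id:
  assumes n: "n \<ge> 3"
  shows "lambda (mat n n (\<lambda>(i,j). if i = j then 0 else 1)) (n - 1) < 0"
proof -
  define J :: "real mat" where "J = mat n n (\<lambda>(i,j). if i = j then 0 else 1)"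
  define a :: "real vec" where "a = unit_vec n 0 - unit_vec n 1"
  define b :: "real vec" where "b = unit_vec n 1 - unit_vec n 2"
  have "lambda J (n - 1) < 0"
  proof (rule lambda_penultimate_less[where A = J and a = a and b = b])
    show "J \<in> carrier_mat n n" "transpose_mat J = J" "a \<in> carrier_vec n" "b \<in> carrier_vec n" "2 \<le> n"
      using n by (auto simp: J_def a_def b_def intro!: eq_matI)
    fix \<alpha> \<beta> :: real assume ab: "(\<alpha>, \<beta>) \<noteq> (0, 0)"
    define z where "z = \<alpha> \<cdot>\<^sub>v a + \<beta> \<cdot>\<^sub>v b"
    have z: "z \<in> carrier_vec n"
      by (simp add: z_def a_def b_def)
    have z_k: "z $ k = \<alpha> * ((if k = 0 then 1 else 0) - (if k = 1 then 1 else 0))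
        + \<beta> * ((if k = 1 then 1 else 0) - (if k = 2 then 1 else 0))" if "k < n" for k
      using that n by (simp add: z_def a_def b_def)
    have sum_z: "(\<Sum>k<n. z $ k) = 0"
      using n by (simp add: z_k sum.distrib sum_subtractf flip: sum_distrib_left)
    have form: "z \<bullet> (J *\<^sub>v z) = - (z \<bullet> z)"
      unfolding J_def quadratic_form_ones_minus_id[OF z] sum_z by simp
    have "z $ 0 = \<alpha>" "z $ 2 = - \<beta>"
      using n z_k by auto
    then have "z \<noteq> 0\<^sub>v n"
      using ab n by auto
    then have "z \<bullet> z > 0"
      using conjugate_square_greater_0_vec[OF z] by simp
    then have "z \<bullet> (J *\<^sub>v z) < 0 * (z \<bullet> z)"
      unfolding form by simp
    then show "(\<alpha> \<cdot>\<^sub>v a + \<beta> \<cdot>\<^sub>v b) \<bullet> (J *\<^sub>v (\<alpha> \<cdot>\<^sub>v a + \<beta> \<cdot>\<^sub>v b))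
        < 0 * ((\<alpha> \<cdot>\<^sub>v a + \<beta> \<cdot>\<^sub>v b) \<bullet> (\<alpha> \<cdot>\<^sub>v a + \<beta> \<cdot>\<^sub>v b))"
      unfolding z_def .
  qed
  then show ?thesis
    unfolding J_def .
qed

lemma permutes_onto_consecutive_blocks:
  fixes A B C :: "nat set"
  assumes cover: "A \<union> B \<union> C = {..<n}"
    and disjoint: "A \<inter> B = {}" "A \<inter> C = {}" "B \<inter> C = {}"
  obtains \<sigma> where "\<sigma> permutes {..<n}"
    "bij_betw \<sigma> {..<card A} A" "bij_betw \<sigma> {card A..<card A + card B} B"
    "bij_betw \<sigma> {card A + card B..<n} C"
proof -
  have fin: "finite A" "finite B" "finite C"
    using cover by (metis finite_Un finite_lessThan)+
  have "card (A \<union> B \<union> C) = card A + card B + card C"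
    using fin disjoint by (simp add: card_Un_disjoint Int_Un_distrib2)
  then have card: "card A + card B + card C = n"
    unfolding cover by simp
  define a b where "a = card A" and "b = card B"
  obtain fA where fA: "bij_betw fA {..<a} A"
    using finite_same_card_bij[of "{..<a}" A] fin by (auto simp: a_def)
  obtain fB where fB: "bij_betw fB {a..<a + b} B"
    using finite_same_card_bij[of "{a..<a + b}" B] fin by (auto simp: b_def)
  obtain fC where fC: "bij_betw fC {a + b..<n} C"
    using finite_same_card_bij[of "{a + b..<n}" C] fin card by (auto simp: a_def b_def)
  define \<sigma> where
    "\<sigma> i = (if i < a then fA i else if i < a + b then fB i else if i < n then fC i else i)" for i
  have \<sigma>A: "bij_betw \<sigma> {..<a} A"
    using fA by (subst bij_betw_cong[of _ _ fA]) (auto simp: \<sigma>_def)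
  have \<sigma>B: "bij_betw \<sigma> {a..<a + b} B"
    using fB by (subst bij_betw_cong[of _ _ fB]) (auto simp: \<sigma>_def)
  have \<sigma>C: "bij_betw \<sigma> {a + b..<n} C"
    using fC by (subst bij_betw_cong[of _ _ fC]) (auto simp: \<sigma>_def)
  have "bij_betw \<sigma> ({..<a} \<union> {a..<a + b} \<union> {a + b..<n}) (A \<union> B \<union> C)"
    using disjoint by (intro bij_betw_combine \<sigma>A \<sigma>B \<sigma>C) auto
  moreover have "{..<a} \<union> {a..<a + b} \<union> {a + b..<n} = {..<n}"
    using card by (auto simp: a_def b_def)
  ultimately have "bij_betw \<sigma> {..<n} {..<n}"
    unfolding cover by simp
  then have "\<sigma> permutes {..<n}"
    by (rule bij_imp_permutes) (use card in \<open>simp add: \<sigma>_def a_def b_def\<close>)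
  then show ?thesis
    using \<sigma>A \<sigma>B \<sigma>C unfolding a_def b_def by (rule that)
qed

lemma block_form_eqI:
  fixes A :: "real mat"
  assumes A: "A \<in> carrier_mat (P + N + Z) (P + N + Z)" "transpose_mat A = A"
    and PP: "\<And>i j. i < P \<Longrightarrow> j < P \<Longrightarrow> A $$ (i,j) = 0"
    and NN: "\<And>i j. P \<le> i \<Longrightarrow> i < P + N \<Longrightarrow> P \<le> j \<Longrightarrow> j < P + N \<Longrightarrow> A $$ (i,j) = 0"
    and PN: "\<And>i j. i < P \<Longrightarrow> P \<le> j \<Longrightarrow> j < P + N \<Longrightarrow> A $$ (i,j) = 1"
  shows "A = block_form P N Z (mat P Z (\<lambda>(i,k). A $$ (i, P + N + k)))
    (mat N Z (\<lambda>(i,k). A $$ (P + i, P + N + k))) (mat Z Z (\<lambda>(i,k). A $$ (P + N + i, P + N + k)))"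
proof (rule eq_matI)
  fix i j assume "i < dim_row (block_form P N Z (mat P Z (\<lambda>(i,k). A $$ (i, P + N + k)))
    (mat N Z (\<lambda>(i,k). A $$ (P + i, P + N + k))) (mat Z Z (\<lambda>(i,k). A $$ (P + N + i, P + N + k))))"
    "j < dim_col (block_form P N Z (mat P Z (\<lambda>(i,k). A $$ (i, P + N + k)))
    (mat N Z (\<lambda>(i,k). A $$ (P + i, P + N + k))) (mat Z Z (\<lambda>(i,k). A $$ (P + N + i, P + N + k))))"
  then have i: "i < P + N + Z" and j: "j < P + N + Z"
    by (simp_all add: block_form_def)
  have sym: "A $$ (j,i) = A $$ (i,j)"
    by (metis A i j carrier_matD index_transpose_mat(1))
  have NP: "A $$ (i,j) = 1" if "P \<le> i" "i < P + N" "j < P"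
    using PN[of j i] that sym by simp
  show "A $$ (i,j) = block_form P N Z (mat P Z (\<lambda>(i,k). A $$ (i, P + N + k)))
    (mat N Z (\<lambda>(i,k). A $$ (P + i, P + N + k))) (mat Z Z (\<lambda>(i,k). A $$ (P + N + i, P + N + k))) $$ (i,j)"
    using i j PP NN PN NP sym by (auto simp: block_form_def)
qed (use A in \<open>auto simp: block_form_def\<close>)

locale simple_minimiser_eigenvector =
  fixes n :: nat and M :: "real mat" and w :: "real vec"
  assumes n: "2 \<le> n"
    and minimiser: "simple_minimiser n M"
    and w: "w \<in> carrier_vec n" "w \<bullet> w = 1" "M *\<^sub>v w = lambda M (n - 1) \<cdot>\<^sub>v w"
begin

abbreviation lam :: real where
  "lam \<equiv> lambda M (n - 1)"

lemma
  shows M_in_S: "M \<in> S n"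
    and lambda_n_less: "lambda M n < lam"
    and lam_minimal: "M' \<in> S n \<Longrightarrow> lam \<le> lambda M' (n - 1)"
  using minimiser unfolding simple_minimiser_def by auto

lemma
  shows M_carrier: "M \<in> carrier_mat n n"
    and M_sym: "transpose_mat M = M"
    and M_entries: "i < n \<Longrightarrow> j < n \<Longrightarrow> 0 \<le> M $$ (i,j) \<and> M $$ (i,j) \<le> 1"
  using M_in_S unfolding S_def by auto

lemma M_entry_sym: "i < n \<Longrightarrow> j < n \<Longrightarrow> M $$ (j,i) = M $$ (i,j)"
  by (metis M_carrier M_sym carrier_matD index_transpose_mat(1))

lemma bottom_eigenvector:
  obtains u where "u \<in> carrier_vec n" "u \<bullet> u = 1" "M *\<^sub>v u = lambda M n \<cdot>\<^sub>v u" "u \<bullet> w = 0"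
proof -
  obtain u where u: "u \<in> carrier_vec n" "u \<bullet> u = 1" "M *\<^sub>v u = lambda M n \<cdot>\<^sub>v u"
    using lambda_has_unit_eigenvector[OF M_carrier M_sym, of n] n by auto
  have "(transpose_mat M *\<^sub>v u) \<bullet> w = u \<bullet> (M *\<^sub>v w)"
    by (rule transpose_vec_mult_scalar[OF M_carrier w(1) u(1)])
  then have "lambda M n * (u \<bullet> w) = lam * (u \<bullet> w)"
    unfolding M_sym u(3) w(3) using u(1) w(1) by simp
  then have "u \<bullet> w = 0"
    using lambda_n_less by simp
  with u show ?thesis
    by (rule that)
qed

lemma quadratic_form_sym_update_plane:
  assumes i: "i < n" and j: "j < n"
    and u: "u \<in> carrier_vec n" "u \<bullet> u = 1" "M *\<^sub>v u = lambda M n \<cdot>\<^sub>v u" and uw: "u \<bullet> w = 0"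
  shows "(a \<cdot>\<^sub>v u + b \<cdot>\<^sub>v w) \<bullet> (sym_update M i j c *\<^sub>v (a \<cdot>\<^sub>v u + b \<cdot>\<^sub>v w)) =
    a\<^sup>2 * lambda M n + b\<^sup>2 * lam + (c - M $$ (i,j)) *
      (a\<^sup>2 * entry_form i j u u + 2 * a * b * entry_form i j u w + b\<^sup>2 * entry_form i j w w)"
proof -
  have z: "a \<cdot>\<^sub>v u + b \<cdot>\<^sub>v w \<in> carrier_vec n"
    using u w by simp
  show ?thesis
    using quadratic_form_sym_update[OF M_carrier i j z M_entry_sym[OF i j], where c = c]
      quadratic_form_eigenvector_plane(1)[OF M_carrier u w uw]
      entry_form_linear_combination[OF i j u(1) w(1)] by simp
qed

lemma small_update_lowers_lam:
  assumes i: "i < n" and j: "j < n" and r: "entry_form i j w w \<noteq> 0"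
  obtains t where "t > 0"
    "\<And>c. \<bar>c - M $$ (i,j)\<bar> \<le> t \<Longrightarrow> (c - M $$ (i,j)) * entry_form i j w w < 0 \<Longrightarrow>
       lambda (sym_update M i j c) (n - 1) < lam"
proof -
  obtain u where u: "u \<in> carrier_vec n" "u \<bullet> u = 1" "M *\<^sub>v u = lambda M n \<cdot>\<^sub>v u"
    and uw: "u \<bullet> w = 0"
    using bottom_eigenvector by blast
  define d where "d = lam - lambda M n"
  have d: "d > 0"
    using lambda_n_less by (simp add: d_def)
  obtain t where t: "t > 0" and negdef: "\<And>h a b. \<bar>h\<bar> \<le> t \<Longrightarrow> h * entry_form i j w w < 0 \<Longrightarrow>
      (a, b) \<noteq> (0, 0) \<Longrightarrow> (- d + h * entry_form i j u u) * a\<^sup>2 + 2 * (h * entry_form i j u w) * a * b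
        + (h * entry_form i j w w) * b\<^sup>2 < 0"
    using perturbation_radius_exists[OF d r] by blast
  show ?thesis
  proof (rule that[OF t])
    fix c assume small: "\<bar>c - M $$ (i,j)\<bar> \<le> t" and descent: "(c - M $$ (i,j)) * entry_form i j w w < 0"
    define M' where "M' = sym_update M i j c"
    have "lambda M' (n - 1) < lam"
    proof (rule lambda_penultimate_less[where a = u and b = w])
      show "M' \<in> carrier_mat n n" "transpose_mat M' = M'"
        using M_carrier M_entry_sym by (auto simp: M'_def sym_update_def intro!: eq_matI)
      show "2 \<le> n" "u \<in> carrier_vec n" "w \<in> carrier_vec n"
        using n u w by auto
      fix a b :: real assume ab: "(a, b) \<noteq> (0, 0)"
      have "(a \<cdot>\<^sub>v u + b \<cdot>\<^sub>v w) \<bullet> (M' *\<^sub>v (a \<cdot>\<^sub>v u + b \<cdot>\<^sub>v w)) = lam * (a\<^sup>2 + b\<^sup>2)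
          + ((- d + (c - M $$ (i,j)) * entry_form i j u u) * a\<^sup>2
          + 2 * ((c - M $$ (i,j)) * entry_form i j u w) * a * b + ((c - M $$ (i,j)) * entry_form i j w w) * b\<^sup>2)"
        unfolding M'_def quadratic_form_sym_update_plane[OF i j u uw] d_def by (simp add: algebra_simps)
      also have "\<dots> < lam * (a\<^sup>2 + b\<^sup>2)"
        using negdef[OF small descent ab] by simp
      also have "a\<^sup>2 + b\<^sup>2 = (a \<cdot>\<^sub>v u + b \<cdot>\<^sub>v w) \<bullet> (a \<cdot>\<^sub>v u + b \<cdot>\<^sub>v w)"
        by (rule quadratic_form_eigenvector_plane(2)[OF M_carrier u w uw, symmetric])
      finally show "(a \<cdot>\<^sub>v u + b \<cdot>\<^sub>v w) \<bullet> (M' *\<^sub>v (a \<cdot>\<^sub>v u + b \<cdot>\<^sub>v w))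
          < lam * ((a \<cdot>\<^sub>v u + b \<cdot>\<^sub>v w) \<bullet> (a \<cdot>\<^sub>v u + b \<cdot>\<^sub>v w))" .
    qed
    then show "lambda (sym_update M i j c) (n - 1) < lam"
      unfolding M'_def .
  qed
qed

text \<open>\<open>(c - M\<^sub>i\<^sub>j) * entry_form i j w w\<close> is the first-order change of \<open>lam\<close> under the
  update; since \<open>[0,1]\<close> is convex, a descent direction could be followed a small step.\<close>

lemma no_descent_entry:
  assumes i: "i < n" and j: "j < n" and c: "0 \<le> c" "c \<le> 1"
    and descent: "(c - M $$ (i,j)) * entry_form i j w w < 0"
  shows False
proof -
  have "entry_form i j w w \<noteq> 0"
    using descent by auto
  then obtain t where t: "t > 0" and lowers: "\<And>c. \<bar>c - M $$ (i,j)\<bar> \<le> t \<Longrightarrow>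
      (c - M $$ (i,j)) * entry_form i j w w < 0 \<Longrightarrow> lambda (sym_update M i j c) (n - 1) < lam"
    using small_update_lowers_lam[OF i j] by blast
  have cM: "c \<noteq> M $$ (i,j)"
    using descent by auto
  define s where "s = min 1 (t / \<bar>c - M $$ (i,j)\<bar>)"
  have s: "0 < s" "s \<le> 1"
    using t cM by (auto simp: s_def)
  define c' where "c' = (1 - s) * M $$ (i,j) + s * c"
  have "0 \<le> c'"
    unfolding c'_def using M_entries[OF i j] c s by simp
  moreover have "c' \<le> 1"
    unfolding c'_def using M_entries[OF i j] c s by (intro convex_bound_le) auto
  ultimately have "sym_update M i j c' \<in> S n"
    by (rule sym_update_in_S[OF M_in_S i j])
  moreover have "c' - M $$ (i,j) = s * (c - M $$ (i,j))"
    by (simp add: c'_def algebra_simps)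
  then have "lambda (sym_update M i j c') (n - 1) < lam"
  proof (intro lowers)
    have "s * \<bar>c - M $$ (i,j)\<bar> \<le> t"
      using t cM by (auto simp: s_def min_def field_simps)
    then show "\<bar>c' - M $$ (i,j)\<bar> \<le> t"
      using s by (simp add: \<open>c' - M $$ (i,j) = s * (c - M $$ (i,j))\<close> abs_mult)
    show "(c' - M $$ (i,j)) * entry_form i j w w < 0"
      using s descent by (simp add: \<open>c' - M $$ (i,j) = s * (c - M $$ (i,j))\<close> mult.assoc mult_pos_neg)
  qed
  ultimately show False
    using lam_minimal by fastforce
qed

lemma same_sign_entry_zero:
  assumes i: "i < n" and j: "j < n" and pos: "0 < w $ i * w $ j"
  shows "M $$ (i,j) = 0"
proof (rule ccontr)
  assume "M $$ (i,j) \<noteq> 0"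
  then have "0 < M $$ (i,j)"
    using M_entries[OF i j] by simp
  moreover have "0 < entry_form i j w w"
    using pos by (auto simp: entry_form_def mult.commute)
  ultimately show False
    using no_descent_entry[OF i j, of 0] by (simp add: mult_pos_pos)
qed

lemma opposite_sign_entry_one:
  assumes i: "i < n" and j: "j < n" and neg: "w $ i * w $ j < 0"
  shows "M $$ (i,j) = 1"
proof (rule ccontr)
  assume "M $$ (i,j) \<noteq> 1"
  then have "0 < 1 - M $$ (i,j)"
    using M_entries[OF i j] by simp
  moreover have "i \<noteq> j"
    using neg by (metis not_square_less_zero)
  then have "entry_form i j w w < 0"
    using neg by (simp add: entry_form_def mult.commute)
  ultimately show False
    using no_descent_entry[OF i j, of 1] by (simp add: mult_pos_neg)
qed

lemma lam_nonpos: "lam \<le> 0"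
proof -
  have "0\<^sub>m n n \<in> S n"
    unfolding S_def by auto
  then show ?thesis
    using lam_minimal lambda_zero_mat[of "n - 1" n] n by fastforce
qed

lemma lam_negative: "lam < 0"
proof (cases "n = 2")
  case True
  \<comment> \<open>the trace gives \<open>\<lambda>\<^sub>1 > 0\<close>, contradicting \<open>lam \<le> 0\<close>: there is no simple minimiser for \<open>n = 2\<close>\<close>
  have "length (eigs_desc M) = 2"
    using length_eigs_desc[OF M_carrier M_sym] True by simp
  then have "sum_list (eigs_desc M) = lambda M 1 + lambda M 2"
    unfolding lambda_def by (cases "eigs_desc M") (auto simp: length_Suc_conv)
  moreover have "0 \<le> (\<Sum>i<n. M $$ (i,i))"
    using M_entries by (intro sum_nonneg) auto
  ultimately have "0 \<le> lambda M 1 + lambda M 2"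
    using sum_diag_eq_sum_eigs_desc[OF M_carrier M_sym] by simp
  then show ?thesis
    using lambda_n_less lam_nonpos True by simp
next
  case False
  then show ?thesis
    using lam_minimal[OF ones_minus_id_in_S] lambda_penultimate_ones_minus_id[of n] n by simp
qed

definition pos_coords :: "nat set" where
  "pos_coords = {i. i < n \<and> 0 < w $ i}"

definition neg_coords :: "nat set" where
  "neg_coords = {i. i < n \<and> w $ i < 0}"

definition zero_coords :: "nat set" where
  "zero_coords = {i. i < n \<and> w $ i = 0}"

abbreviation "n_pos \<equiv> card pos_coords"
abbreviation "n_neg \<equiv> card neg_coords"
abbreviation "n_zero \<equiv> card zero_coords"

lemma coords_partition:
  "pos_coords \<union> neg_coords \<union> zero_coords = {..<n}" "pos_coords \<inter> neg_coords = {}"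
  "pos_coords \<inter> zero_coords = {}" "neg_coords \<inter> zero_coords = {}"
  unfolding pos_coords_def neg_coords_def zero_coords_def by auto

lemma finite_coords: "finite pos_coords" "finite neg_coords" "finite zero_coords"
  unfolding pos_coords_def neg_coords_def zero_coords_def by auto

lemma card_coords: "n_pos + n_neg + n_zero = n"
proof -
  have "card (pos_coords \<union> neg_coords \<union> zero_coords) = n_pos + n_neg + n_zero"
    using finite_coords coords_partition(2-4) by (simp add: card_Un_disjoint Int_Un_distrib2)
  then show ?thesis
    unfolding coords_partition(1) by simp
qed

lemma sum_split_coords:
  assumes "\<And>j. j \<in> zero_coords \<Longrightarrow> f j = 0"
  shows "(\<Sum>j<n. f j) = (\<Sum>j\<in>pos_coords. f j) + (\<Sum>j\<in>neg_coords. f j)"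
proof -
  have "(\<Sum>j<n. f j) = (\<Sum>j\<in>pos_coords. f j) + (\<Sum>j\<in>neg_coords. f j) + (\<Sum>j\<in>zero_coords. f j)"
    unfolding coords_partition(1)[symmetric] using finite_coords coords_partition(2-4)
    by (simp add: sum.union_disjoint Int_Un_distrib2)
  then show ?thesis
    using assms by simp
qed

lemma eigen_row_split:
  assumes i: "i < n"
  shows "lam * w $ i = (\<Sum>j\<in>pos_coords. M $$ (i,j) * w $ j) + (\<Sum>j\<in>neg_coords. M $$ (i,j) * w $ j)"
proof -
  have "lam * w $ i = (\<Sum>j<n. M $$ (i,j) * w $ j)"
    using arg_cong[OF w(3), of "\<lambda>v. v $ i"] M_carrier w(1) i
    by (simp add: scalar_prod_def lessThan_atLeast0)
  then show ?thesis
    using sum_split_coords[of "\<lambda>j. M $$ (i,j) * w $ j"] by (simp add: zero_coords_def)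
qed

lemma eigen_eq_on_pos:
  assumes "i \<in> pos_coords"
  shows "lam * w $ i = (\<Sum>j\<in>neg_coords. w $ j)"
proof -
  have i: "i < n" "0 < w $ i"
    using assms by (auto simp: pos_coords_def)
  have "(\<Sum>j\<in>pos_coords. M $$ (i,j) * w $ j) = 0"
    using same_sign_entry_zero[OF i(1)] i(2) by (intro sum.neutral) (auto simp: pos_coords_def)
  moreover have "(\<Sum>j\<in>neg_coords. M $$ (i,j) * w $ j) = (\<Sum>j\<in>neg_coords. w $ j)"
    using opposite_sign_entry_one[OF i(1)] i(2)
    by (intro sum.cong) (auto simp: neg_coords_def mult_pos_neg)
  ultimately show ?thesis
    using eigen_row_split[OF i(1)] by simp
qed

lemma eigen_eq_on_neg:
  assumes "i \<in> neg_coords"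
  shows "lam * w $ i = (\<Sum>j\<in>pos_coords. w $ j)"
proof -
  have i: "i < n" "w $ i < 0"
    using assms by (auto simp: neg_coords_def)
  have "(\<Sum>j\<in>neg_coords. M $$ (i,j) * w $ j) = 0"
    using same_sign_entry_zero[OF i(1)] i(2)
    by (intro sum.neutral) (auto simp: neg_coords_def mult_neg_neg)
  moreover have "(\<Sum>j\<in>pos_coords. M $$ (i,j) * w $ j) = (\<Sum>j\<in>pos_coords. w $ j)"
    using opposite_sign_entry_one[OF i(1)] i(2)
    by (intro sum.cong) (auto simp: pos_coords_def mult_neg_pos)
  ultimately show ?thesis
    using eigen_row_split[OF i(1)] by simp
qed

lemma coords_nonempty: "pos_coords \<noteq> {}" "neg_coords \<noteq> {}"
proof -
  have pos_empty: "neg_coords = {}" if "pos_coords = {}"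
  proof (rule ccontr)
    assume "neg_coords \<noteq> {}"
    then obtain i where "i \<in> neg_coords"
      by blast
    then show False
      using eigen_eq_on_neg[of i] that lam_negative by (auto simp: neg_coords_def)
  qed
  have neg_empty: "pos_coords = {}" if "neg_coords = {}"
  proof (rule ccontr)
    assume "pos_coords \<noteq> {}"
    then obtain i where "i \<in> pos_coords"
      by blast
    then show False
      using eigen_eq_on_pos[of i] that lam_negative by (auto simp: pos_coords_def)
  qed
  have "w \<noteq> 0\<^sub>v n"
    using w(2) by auto
  then obtain i where "i < n" "w $ i \<noteq> 0"
    using w(1) by (metis eq_vecI carrier_vecD index_zero_vec)
  then have "pos_coords \<noteq> {} \<or> neg_coords \<noteq> {}"
    unfolding pos_coords_def neg_coords_def by (auto simp: neq_iff)
  then show "pos_coords \<noteq> {}" "neg_coords \<noteq> {}"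
    using pos_empty neg_empty by blast+
qed

lemma w_constant_on_coords:
  obtains a b where "0 < a" "0 < b" "\<And>i. i \<in> pos_coords \<Longrightarrow> w $ i = a"
    "\<And>i. i \<in> neg_coords \<Longrightarrow> w $ i = - b"
    "lam * a = - (real n_neg * b)" "lam * b = - (real n_pos * a)"
proof
  define a where "a = (\<Sum>j\<in>neg_coords. w $ j) / lam"
  define b where "b = - (\<Sum>j\<in>pos_coords. w $ j) / lam"
  show wa: "w $ i = a" if "i \<in> pos_coords" for i
    unfolding a_def using eigen_eq_on_pos[OF that] lam_negative by (simp add: field_simps)
  show wb: "w $ i = - b" if "i \<in> neg_coords" for i
    unfolding b_def using eigen_eq_on_neg[OF that] lam_negative by (simp add: field_simps)
  obtain i where i: "i \<in> pos_coords"
    using coords_nonempty(1) by blast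
  then have "0 < w $ i"
    by (simp add: pos_coords_def)
  then show "0 < a"
    using wa[OF i] by simp
  obtain k where k: "k \<in> neg_coords"
    using coords_nonempty(2) by blast
  then have "w $ k < 0"
    by (simp add: neg_coords_def)
  then show "0 < b"
    using wb[OF k] by simp
  show "lam * a = - (real n_neg * b)"
    unfolding a_def using lam_negative wb by simp
  show "lam * b = - (real n_pos * a)"
    unfolding b_def using lam_negative wa by simp
qed

lemma lam_eq: "lam = - sqrt (real n_pos * real n_neg)"
proof -
  obtain a b where a: "0 < a" and "0 < b" "\<And>i. i \<in> pos_coords \<Longrightarrow> w $ i = a"
    "\<And>i. i \<in> neg_coords \<Longrightarrow> w $ i = - b"
    and ea: "lam * a = - (real n_neg * b)" and eb: "lam * b = - (real n_pos * a)"
    using w_constant_on_coords by blast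
  have "lam\<^sup>2 * a = lam * (lam * a)"
    by (simp add: power2_eq_square)
  also have "\<dots> = - real n_neg * (lam * b)"
    unfolding ea by simp
  also have "\<dots> = real n_pos * real n_neg * a"
    unfolding eb by simp
  finally have "lam\<^sup>2 = real n_pos * real n_neg"
    using a by simp
  then show ?thesis
    using lam_negative by (metis abs_of_neg real_sqrt_abs minus_minus)
qed

lemma
  shows w_on_pos: "i \<in> pos_coords \<Longrightarrow> w $ i = 1 / sqrt (2 * real n_pos)"
    and w_on_neg: "i \<in> neg_coords \<Longrightarrow> w $ i = - 1 / sqrt (2 * real n_neg)"
proof -
  obtain a b where a: "0 < a" and b: "0 < b" and wa: "\<And>i. i \<in> pos_coords \<Longrightarrow> w $ i = a"
    and wb: "\<And>i. i \<in> neg_coords \<Longrightarrow> w $ i = - b"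
    and ea: "lam * a = - (real n_neg * b)" and eb: "lam * b = - (real n_pos * a)"
    using w_constant_on_coords by blast
  have "1 = (\<Sum>j<n. (w $ j)\<^sup>2)"
    using w(1,2) by (simp add: scalar_prod_def lessThan_atLeast0 power2_eq_square)
  also have "\<dots> = real n_pos * a\<^sup>2 + real n_neg * b\<^sup>2"
    using sum_split_coords[of "\<lambda>j. (w $ j)\<^sup>2"] wa wb by (simp add: zero_coords_def)
  finally have norm: "real n_pos * a\<^sup>2 + real n_neg * b\<^sup>2 = 1" ..
  have "real n_pos * a\<^sup>2 = - (lam * b) * a"
    unfolding eb by (simp add: power2_eq_square)
  moreover have "real n_neg * b\<^sup>2 = - (lam * a) * b"
    unfolding ea by (simp add: power2_eq_square)
  ultimately have "real n_pos * a\<^sup>2 = real n_neg * b\<^sup>2"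
    by (simp add: algebra_simps)
  then have Pa: "real n_pos * a\<^sup>2 = 1 / 2" and Nb: "real n_neg * b\<^sup>2 = 1 / 2"
    using norm by linarith+
  have P: "0 < real n_pos" and N: "0 < real n_neg"
    using coords_nonempty finite_coords by (simp_all add: card_gt_0_iff)
  have "a = sqrt (1 / (2 * real n_pos))"
    using Pa P a by (intro real_sqrt_unique[symmetric]) (simp_all add: field_simps)
  then show "i \<in> pos_coords \<Longrightarrow> w $ i = 1 / sqrt (2 * real n_pos)"
    using wa by (simp add: real_sqrt_divide)
  have "b = sqrt (1 / (2 * real n_neg))"
    using Nb N b by (intro real_sqrt_unique[symmetric]) (simp_all add: field_simps)
  then show "i \<in> neg_coords \<Longrightarrow> w $ i = - 1 / sqrt (2 * real n_neg)"
    using wb by (simp add: real_sqrt_divide)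
qed

lemma zero_coord_balanced:
  assumes "z \<in> zero_coords"
  shows "1 / sqrt (real n_pos) * (\<Sum>p\<in>pos_coords. M $$ (p,z)) =
    1 / sqrt (real n_neg) * (\<Sum>q\<in>neg_coords. M $$ (q,z))"
proof -
  have z: "z < n" "w $ z = 0"
    using assms by (auto simp: zero_coords_def)
  have "(\<Sum>j\<in>pos_coords. M $$ (z,j) * w $ j) = (\<Sum>p\<in>pos_coords. 1 / sqrt (2 * real n_pos) * M $$ (p,z))"
  proof (rule sum.cong[OF refl])
    fix j assume j: "j \<in> pos_coords"
    then have "j < n"
      by (simp add: pos_coords_def)
    then show "M $$ (z,j) * w $ j = 1 / sqrt (2 * real n_pos) * M $$ (j,z)"
      using w_on_pos[OF j] M_entry_sym[OF z(1)] by simp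
  qed
  moreover have "(\<Sum>j\<in>neg_coords. M $$ (z,j) * w $ j) = (\<Sum>q\<in>neg_coords. - 1 / sqrt (2 * real n_neg) * M $$ (q,z))"
  proof (rule sum.cong[OF refl])
    fix j assume j: "j \<in> neg_coords"
    then have "j < n"
      by (simp add: neg_coords_def)
    then show "M $$ (z,j) * w $ j = - 1 / sqrt (2 * real n_neg) * M $$ (j,z)"
      using w_on_neg[OF j] M_entry_sym[OF z(1)] by simp
  qed
  ultimately have "1 / sqrt 2 * (1 / sqrt (real n_pos) * (\<Sum>p\<in>pos_coords. M $$ (p,z)) -
      1 / sqrt (real n_neg) * (\<Sum>q\<in>neg_coords. M $$ (q,z))) = 0"
    using eigen_row_split[OF z(1)] z(2)
    by (simp add: real_sqrt_mult sum_distrib_left right_diff_distrib sum_negf)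
  then show ?thesis
    by simp
qed

end

locale simple_minimiser_blocks = simple_minimiser_eigenvector +
  fixes \<sigma> :: "nat \<Rightarrow> nat"
  assumes \<sigma>_permutes: "\<sigma> permutes {..<n}"
    and \<sigma>_pos: "bij_betw \<sigma> {..<n_pos} pos_coords"
    and \<sigma>_neg: "bij_betw \<sigma> {n_pos..<n_pos + n_neg} neg_coords"
    and \<sigma>_zero: "bij_betw \<sigma> {n_pos + n_neg..<n} zero_coords"
begin

definition M_perm :: "real mat" where
  "M_perm = mat n n (\<lambda>(i,j). M $$ (\<sigma> i, \<sigma> j))"

definition X :: "real mat" where
  "X = mat n_pos n_zero (\<lambda>(i,k). M_perm $$ (i, n_pos + n_neg + k))"

definition Y :: "real mat" where
  "Y = mat n_neg n_zero (\<lambda>(i,k). M_perm $$ (n_pos + i, n_pos + n_neg + k))"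

definition W :: "real mat" where
  "W = mat n_zero n_zero (\<lambda>(i,k). M_perm $$ (n_pos + n_neg + i, n_pos + n_neg + k))"

lemma
  shows \<sigma>_pos_mem: "i < n_pos \<Longrightarrow> \<sigma> i \<in> pos_coords"
    and \<sigma>_neg_mem: "n_pos \<le> i \<Longrightarrow> i < n_pos + n_neg \<Longrightarrow> \<sigma> i \<in> neg_coords"
    and \<sigma>_zero_mem: "n_pos + n_neg \<le> i \<Longrightarrow> i < n \<Longrightarrow> \<sigma> i \<in> zero_coords"
  using bij_betwE[OF \<sigma>_pos] bij_betwE[OF \<sigma>_neg] bij_betwE[OF \<sigma>_zero] by auto

lemma \<sigma>_less: "i < n \<Longrightarrow> \<sigma> i < n"
  using permutes_in_image[OF \<sigma>_permutes] by simp

lemma M_perm_block_form: "M_perm = block_form n_pos n_neg n_zero X Y W"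
  unfolding X_def Y_def W_def
proof (rule block_form_eqI)
  show "M_perm \<in> carrier_mat (n_pos + n_neg + n_zero) (n_pos + n_neg + n_zero)"
    "transpose_mat M_perm = M_perm"
    using card_coords M_entry_sym \<sigma>_less by (auto simp: M_perm_def intro!: eq_matI)
  fix i j
  show "i < n_pos \<Longrightarrow> j < n_pos \<Longrightarrow> M_perm $$ (i,j) = 0"
    using \<sigma>_pos_mem[of i] \<sigma>_pos_mem[of j] card_coords
    by (auto simp: M_perm_def pos_coords_def intro!: same_sign_entry_zero)
  show "n_pos \<le> i \<Longrightarrow> i < n_pos + n_neg \<Longrightarrow> n_pos \<le> j \<Longrightarrow> j < n_pos + n_neg \<Longrightarrow> M_perm $$ (i,j) = 0"
    using \<sigma>_neg_mem[of i] \<sigma>_neg_mem[of j] card_coords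
    by (auto simp: M_perm_def neg_coords_def mult_neg_neg intro!: same_sign_entry_zero)
  show "i < n_pos \<Longrightarrow> n_pos \<le> j \<Longrightarrow> j < n_pos + n_neg \<Longrightarrow> M_perm $$ (i,j) = 1"
    using \<sigma>_pos_mem[of i] \<sigma>_neg_mem[of j] card_coords
    by (auto simp: M_perm_def pos_coords_def neg_coords_def mult_pos_neg intro!: opposite_sign_entry_one)
qed

lemma entries_01_blocks: "entries_01 X" "entries_01 Y" "entries_01 W"
  using M_entries \<sigma>_less card_coords by (auto simp: entries_01_def X_def Y_def W_def M_perm_def)

lemma column_sums_balanced:
  "(1 / sqrt (real n_pos)) \<cdot>\<^sub>v (transpose_mat X *\<^sub>v vec n_pos (\<lambda>_. 1)) =
    (1 / sqrt (real n_neg)) \<cdot>\<^sub>v (transpose_mat Y *\<^sub>v vec n_neg (\<lambda>_. 1))"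
proof (rule eq_vecI)
  fix k assume "k < dim_vec ((1 / sqrt (real n_neg)) \<cdot>\<^sub>v (transpose_mat Y *\<^sub>v vec n_neg (\<lambda>_. 1)))"
  then have k: "k < n_zero"
    by (simp add: Y_def)
  define z where "z = \<sigma> (n_pos + n_neg + k)"
  have z: "z \<in> zero_coords"
    unfolding z_def using k card_coords by (intro \<sigma>_zero_mem) auto
  have "(transpose_mat X *\<^sub>v vec n_pos (\<lambda>_. 1)) $ k = (\<Sum>i<n_pos. M $$ (\<sigma> i, z))"
    using k card_coords by (simp add: X_def M_perm_def z_def scalar_prod_def lessThan_atLeast0)
  also have "\<dots> = (\<Sum>p\<in>pos_coords. M $$ (p, z))"
    by (rule sum.reindex_bij_betw[OF \<sigma>_pos])
  finally have X_col: "(transpose_mat X *\<^sub>v vec n_pos (\<lambda>_. 1)) $ k = (\<Sum>p\<in>pos_coords. M $$ (p, z))" .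
  have "(transpose_mat Y *\<^sub>v vec n_neg (\<lambda>_. 1)) $ k = (\<Sum>i<n_neg. M $$ (\<sigma> (n_pos + i), z))"
    using k card_coords by (simp add: Y_def M_perm_def z_def scalar_prod_def lessThan_atLeast0)
  also have "\<dots> = (\<Sum>i\<in>{n_pos..<n_pos + n_neg}. M $$ (\<sigma> i, z))"
    by (simp add: sum.atLeastLessThan_shift_0[of _ n_pos] lessThan_atLeast0)
  also have "\<dots> = (\<Sum>q\<in>neg_coords. M $$ (q, z))"
    by (rule sum.reindex_bij_betw[OF \<sigma>_neg])
  finally have Y_col: "(transpose_mat Y *\<^sub>v vec n_neg (\<lambda>_. 1)) $ k = (\<Sum>q\<in>neg_coords. M $$ (q, z))" .
  show "((1 / sqrt (real n_pos)) \<cdot>\<^sub>v (transpose_mat X *\<^sub>v vec n_pos (\<lambda>_. 1))) $ k =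
      ((1 / sqrt (real n_neg)) \<cdot>\<^sub>v (transpose_mat Y *\<^sub>v vec n_neg (\<lambda>_. 1))) $ k"
    using k X_col Y_col zero_coord_balanced[OF z] by (simp add: X_def Y_def)
qed (simp add: X_def Y_def)

lemma permuted_eigenvector:
  "vec n (\<lambda>i. w $ (\<sigma> i)) = vec n (\<lambda>i. if i < n_pos then 1 / sqrt (2 * real n_pos)
     else if i < n_pos + n_neg then - 1 / sqrt (2 * real n_neg) else 0)"
  using w_on_pos[OF \<sigma>_pos_mem] w_on_neg[OF \<sigma>_neg_mem] \<sigma>_zero_mem
  by (intro eq_vecI) (auto simp: zero_coords_def)

end

theorem theorem4p5:
  fixes n :: nat and M :: "real mat" and w :: "real vec"
  assumes "n \<ge> 2"
    and "simple_minimiser n M"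
    and "w \<in> carrier_vec n" and "w \<bullet> w = 1"
    and "M *\<^sub>v w = lambda M (n - 1) \<cdot>\<^sub>v w"
  shows "\<exists>\<sigma> P N Z X Y W.
    \<sigma> permutes {..<n} \<and> P \<ge> 1 \<and> N \<ge> 1 \<and> P + N + Z = n \<and>
    X \<in> carrier_mat P Z \<and> Y \<in> carrier_mat N Z \<and> W \<in> carrier_mat Z Z \<and>
    entries_01 X \<and> entries_01 Y \<and> entries_01 W \<and>
    (1 / sqrt (real P)) \<cdot>\<^sub>v (transpose_mat X *\<^sub>v vec P (\<lambda>_. 1)) =
      (1 / sqrt (real N)) \<cdot>\<^sub>v (transpose_mat Y *\<^sub>v vec N (\<lambda>_. 1)) \<and>
    mat n n (\<lambda>(i,j). M $$ (\<sigma> i, \<sigma> j)) = block_form P N Z X Y W \<and>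
    vec n (\<lambda>i. w $ (\<sigma> i)) =
      vec n (\<lambda>i. if i < P then 1 / sqrt (2 * real P)
                 else if i < P + N then - 1 / sqrt (2 * real N) else 0) \<and>
    lambda M (n - 1) = - sqrt (real P * real N)"
proof -
  interpret simple_minimiser_eigenvector n M w
    using assms by unfold_locales
  obtain \<sigma> where "\<sigma> permutes {..<n}" "bij_betw \<sigma> {..<n_pos} pos_coords"
    "bij_betw \<sigma> {n_pos..<n_pos + n_neg} neg_coords" "bij_betw \<sigma> {n_pos + n_neg..<n} zero_coords"
    using permutes_onto_consecutive_blocks[OF coords_partition] by metis
  then interpret simple_minimiser_blocks n M w \<sigma>
    by unfold_locales
  have "1 \<le> n_pos" "1 \<le> n_neg"
    using coords_nonempty finite_coords by (simp_all add: Suc_le_eq card_gt_0_iff)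
  moreover have "X \<in> carrier_mat n_pos n_zero" "Y \<in> carrier_mat n_neg n_zero" "W \<in> carrier_mat n_zero n_zero"
    by (simp_all add: X_def Y_def W_def)
  ultimately show ?thesis
    using \<sigma>_permutes card_coords entries_01_blocks column_sums_balanced
      M_perm_block_form[unfolded M_perm_def] permuted_eigenvector lam_eq
    by blast
qed

end
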